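(* Under the setup in the context (fixed, undirected, connected graph), there is a constant $C\ge 0$, independent of $t$, such that for all integers $t\ge t_0+2$, $$V(t)\le\Big(1-\frac{\gamma\lambda_2}{t}\Big)V(t-1)+\frac{\gamma\lambda_G}{t\lambda_2}R(t-1)+\frac{C}{t^2}.$$
   Context: Fix integers $n\ge 2$ and $N\ge 2$. Let $a_1,\dots,a_n\in\mathbb{R}$, let $A\in\mathbb{R}^{n\times n}$ be the matrix with $A_{k,k+1}=1$ for $k=1,\dots,n-1$, last row $(a_1,a_2,\dots,a_n)$, and all other entries $0$, and let $B=(0,\dots,0,1)^T\in\mathbb{R}^n$. There are $N$ agents with dynamics $x_i(t+1)=Ax_i(t)+Bu_i(t)$, $i=1,\dots,N$, where $x_i(t)=(x_{i1}(t),\dots,x_{in}(t))^T\in\mathbb{R}^n$ and $u_i(t)\in\mathbb{R}$; write $\bar x(t)=\frac1N\sum_{i=1}^N x_i(t)$. Communication graph: $G$ is a fixed, undirected, connected graph on $\{1,\dots,N\}$; $N_i$ is the neighbor set of agent $i$, $d_i=|N_i|$, $d_{\max}=\max_i d_i$, and $L$ is the Laplacian of $G$ (degree matrix minus adjacency matrix), with eigenvalues $0=\lambda_1<\lambda_2\le\dots\le\lambda_N$. Gains: real numbers $b_1,\dots,b_{n-1}$ (compression coefficients), $K_2=[b_1,\dots,b_{n-1},1]\in\mathbb R^{1\times n}$, and $K_1=[-a_1+b_1,\,-a_2+b_2-b_1,\,\dots,\,-a_{n-1}+b_{n-1}-b_{n-2},\,-a_n-b_{n-1}+1]\in\mathbb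 R^{1\times n}$. Communication: for every ordered pair $(i,j)$ with $j\in N_i$ and every integer $t$, agent $i$ receives the bit $s_{ij}(t)=1$ if $K_2x_j(t)+d_{ij}(t)\le c_{ij}$ and $s_{ij}(t)=0$ otherwise, where $c_{ij}\in\mathbb R$ are fixed thresholds and the noises $\{d_{ij}(t)\}$ are i.i.d. $N(0,\sigma^2)$, $\sigma>0$, over all $i,j,t$; $F$ and $f$ denote the distribution function and density of $N(0,\sigma^2)$. Algorithm: fix $\beta>0$, $\gamma>0$, an integer $t_0>\gamma d_{\max}-1$, deterministic initial states $x_i(t_0+1)=x_i^0$ and deterministic initial estimates $\hat z_{ij}(t_0)=\hat z_{ij}^0$, and $M>0$ with $|K_2x_i^0|\le M$ and $|\hat z^0_{ij}|\le M$ for all $i$ and $j\in N_i$. Let $\Pi_M(\zeta)=\max\{-M,\min\{M,\zeta\}\}$ (projection onto $[-M,M]$). For $t\ge t_0+1$, for all $i$ and $j\in N_i$: $\hat z_{ij}(t)=\Pi_M\big(\hat z_{ij}(t-1)+\tfrac{\beta}{t}(F(c_{ij}-\hat z_{ij}(t-1))-s_{ij}(t))\big)$, and $u_i(t)=K_1x_i(t)+\frac{\gamma}{t+1}\sum_{j\in N_i}(\hat z_{ij}(t)-K_2x_i(t))$. Constants and Lyapunov functions: enumerate the $d=\sum_i d_i$ ordered pairs $(i,j)$ with $j\in N_i$ as $p=1,\dots,d$. Let $W\in\mathbb R^{N\times d}$ with $W_{k,p}=1$ if pair $p$ has first component $k$ and $0$ otherwise; $Q\in\mathbb R^{d\times N}$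 with $Q_{p,k}=1$ if pair $p$ has second component $k$ and $0$ otherwise; $J_N=I_N-\frac1N\mathbf 1_N\mathbf 1_N^T$. With $\|\cdot\|$ the spectral norm, set $\lambda_G=\|J_NW\|^2$, $\lambda_{QW}=\|QW\|^2$, $\lambda_{QL}=\|QL\|^2$, $\alpha=2\sqrt{\lambda_{QW}}+\lambda_{QL}\lambda_2/\lambda_G$, and $f_M=\min_{(i,j):\,j\in N_i} f(|c_{ij}|+M)$. Define $V(t)=\sum_{i=1}^N E\big[(K_2x_i(t)-K_2\bar x(t))^2\big]$ and $R(t)=\sum_{i=1}^N\sum_{j\in N_i}E\big[(\hat z_{ij}(t)-K_2x_j(t))^2\big]$. *)

theory Defs
  imports "HOL-Probability.Probability" "Jordan_Normal_Form.Char_Poly"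
begin

(* Agents are 0,...,N-1; state components are 1,...,n (a state is a function nat => real,
   only its values at 1..n matter). *)

definition nbrs :: "(nat \<Rightarrow> nat \<Rightarrow> bool) \<Rightarrow> nat \<Rightarrow> nat \<Rightarrow> nat set" where
  "nbrs E N i = {j. j < N \<and> E i j}"

definition dmax :: "(nat \<Rightarrow> nat \<Rightarrow> bool) \<Rightarrow> nat \<Rightarrow> nat" where
  "dmax E N = Max ((\<lambda>i. card (nbrs E N i)) ` {..<N})"

definition undirected_connected_graph :: "(nat \<Rightarrow> nat \<Rightarrow> bool) \<Rightarrow> nat \<Rightarrow> bool" where
  "undirected_connected_graph E N \<longleftrightarrow>
     (\<forall>i j. E i j \<longrightarrow> i < N \<and> j < N) \<and> (\<forall>i j. E i j \<longrightarrow> E j i) \<and> (\<forall>i. \<not> E i i) \<and>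
     (\<forall>i<N. \<forall>j<N. E\<^sup>*\<^sup>* i j)"

definition pairs :: "(nat \<Rightarrow> nat \<Rightarrow> bool) \<Rightarrow> nat \<Rightarrow> (nat \<times> nat) set" where
  "pairs E N = {(i, j). i < N \<and> j \<in> nbrs E N i}"

definition laplacian :: "(nat \<Rightarrow> nat \<Rightarrow> bool) \<Rightarrow> nat \<Rightarrow> real mat" where
  "laplacian E N = mat N N (\<lambda>(i, j). if i = j then real (card (nbrs E N i))
                                         else if E i j then -1 else 0)"

(* eigenvalues (with multiplicity) listed in increasing order; lambda_k = entry k-1 *)
definition sorted_eigenvalues :: "real mat \<Rightarrow> real list" where
  "sorted_eigenvalues A = sorted_list_of_multiset (proots (char_poly A))"

definition lambda2 :: "(nat \<Rightarrow> nat \<Rightarrow> bool) \<Rightarrow> nat \<Rightarrow> real" where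
  "lambda2 E N = sorted_eigenvalues (laplacian E N) ! 1"

definition spec_norm :: "'r set \<Rightarrow> 'c set \<Rightarrow> ('r \<Rightarrow> 'c \<Rightarrow> real) \<Rightarrow> real" where
  "spec_norm Rw Cl A = Sup {sqrt (\<Sum>r\<in>Rw. (\<Sum>c\<in>Cl. A r c * v c)\<^sup>2) | v. (\<Sum>c\<in>Cl. (v c)\<^sup>2) \<le> 1}"

definition Wmat :: "nat \<Rightarrow> nat \<times> nat \<Rightarrow> real" where
  "Wmat k p = (if fst p = k then 1 else 0)"

definition JN :: "nat \<Rightarrow> nat \<Rightarrow> nat \<Rightarrow> real" where
  "JN N k l = (if k = l then 1 else 0) - 1 / real N"

definition lambdaG :: "(nat \<Rightarrow> nat \<Rightarrow> bool) \<Rightarrow> nat \<Rightarrow> real" where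
  "lambdaG E N = (spec_norm {..<N} (pairs E N)
       (\<lambda>k p. \<Sum>l<N. JN N k l * Wmat l p))\<^sup>2"

definition normal_cdf :: "real \<Rightarrow> real \<Rightarrow> real" where
  "normal_cdf \<sigma> y = measure (density lborel (normal_density 0 \<sigma>)) {..y}"

definition proj :: "real \<Rightarrow> real \<Rightarrow> real" where
  "proj Mb \<zeta> = max (- Mb) (min Mb \<zeta>)"

definition K2 :: "nat \<Rightarrow> (nat \<Rightarrow> real) \<Rightarrow> nat \<Rightarrow> real" where
  "K2 n b k = (if k = n then 1 else b k)"

definition K1 :: "nat \<Rightarrow> (nat \<Rightarrow> real) \<Rightarrow> (nat \<Rightarrow> real) \<Rightarrow> nat \<Rightarrow> real" where
  "K1 n a b k = (if k = 1 then - a 1 + b 1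
                 else if k = n then - a n - b (n - 1) + 1
                 else - a k + b k - b (k - 1))"

definition rowmul :: "nat \<Rightarrow> (nat \<Rightarrow> real) \<Rightarrow> (nat \<Rightarrow> real) \<Rightarrow> real" where
  "rowmul n K v = (\<Sum>k=1..n. K k * v k)"

(* x(t+1) = A x(t) + B u(t), A companion matrix with last row a, B = e_n *)
definition sys_step :: "nat \<Rightarrow> (nat \<Rightarrow> real) \<Rightarrow> (nat \<Rightarrow> real) \<Rightarrow> real \<Rightarrow> nat \<Rightarrow> real" where
  "sys_step n a v w k = (if k < n then v (k + 1) else (\<Sum>l=1..n. a l * v l) + w)"

end

theory Submission
  imports Defs
begin

text \<open>Write \<open>y\<^sub>i = K\<^sub>2 x\<^sub>i\<close>. The gains are such that in closed loop \<open>y\<^sub>i\<close> follows the stochastic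
  approximation recursion \<open>y\<^sub>i(t+1) = y\<^sub>i(t) + \<gamma>/(t+1) \<Sum>\<^sub>j (zh\<^sub>i\<^sub>j(t) - y\<^sub>i(t))\<close> driven by the projected
  estimates \<open>zh\<^sub>i\<^sub>j\<close>. Splitting the innovation into the graph Laplacian of \<open>y\<close> and the estimation
  errors \<open>zh\<^sub>i\<^sub>j - y\<^sub>j\<close>, the Laplacian part contracts the disagreement \<open>\<Sum>\<^sub>i (y\<^sub>i - y\<^sub>a\<^sub>v\<^sub>g)\<^sup>2\<close> by the factor
  \<open>1 - 2\<gamma>\<lambda>\<^sub>2/t\<close> (Courant-Fischer), Young's inequality gives back half of this gain in exchange for
  the term \<open>\<lambda>\<^sub>G/\<lambda>\<^sub>2\<close> times the estimation error, and the quadratic remainder is \<open>O(1/t\<^sup>2)\<close>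
  because everything stays in \<open>[-M, M]\<close>: the estimates are projected there, and the outputs
  follow since \<open>t\<^sub>0 > \<gamma> d\<^sub>m\<^sub>a\<^sub>x - 1\<close> makes each update a convex combination. The inequality holds
  pathwise and is then integrated.

  Since \<open>\<lambda>\<^sub>2\<close> is defined as the second smallest root of the characteristic polynomial, the
  Courant-Fischer bound is derived from scratch: the minimum of the Laplacian form on the unit
  vectors orthogonal to \<open>1\<close> is a positive eigenvalue, and \<open>0\<close> is a simple root because the
  Laplacian of a connected graph is similar to a block matrix \<open>[0 *; 0 B]\<close> with \<open>B\<close> nonsingular.\<close>

section \<open>The Laplacian quadratic form\<close>

definition laplacian_op :: "(nat \<Rightarrow> nat \<Rightarrow> bool) \<Rightarrow> nat \<Rightarrow> (nat \<Rightarrow> real) \<Rightarrow> nat \<Rightarrow> real" where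
  "laplacian_op E N v i = (\<Sum>j<N. (if E i j then 1 else 0) * (v i - v j))"

definition laplacian_form :: "(nat \<Rightarrow> nat \<Rightarrow> bool) \<Rightarrow> nat \<Rightarrow> (nat \<Rightarrow> real) \<Rightarrow> real" where
  "laplacian_form E N v = (\<Sum>i<N. v i * laplacian_op E N v i)"

lemma laplacian_op_nbrs: "laplacian_op E N v i = (\<Sum>j\<in>nbrs E N i. v i - v j)"
proof -
  have "nbrs E N i = {j\<in>{..<N}. E i j}"
    unfolding nbrs_def by auto
  then have "(\<Sum>j\<in>nbrs E N i. v i - v j) = (\<Sum>j<N. if E i j then v i - v j else 0)"
    by (simp only: sum.inter_filter[OF finite_lessThan])
  then show ?thesis
    unfolding laplacian_op_def by (auto intro!: sum.cong)
qed

lemma laplacian_op_shift: "laplacian_op E N (\<lambda>i. v i - s) i = laplacian_op E N v i"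
  unfolding laplacian_op_def by simp

lemma laplacian_op_add_scaled:
  "laplacian_op E N (\<lambda>i. v i + s * w i) i = laplacian_op E N v i + s * laplacian_op E N w i"
  unfolding laplacian_op_def sum_distrib_left sum.distrib[symmetric]
  by (intro sum.cong) (auto simp: algebra_simps)

lemma laplacian_op_scale: "laplacian_op E N (\<lambda>i. s * v i) i = s * laplacian_op E N v i"
  unfolding laplacian_op_def by (simp add: sum_distrib_left algebra_simps)

lemma laplacian_form_scale: "laplacian_form E N (\<lambda>i. s * v i) = s\<^sup>2 * laplacian_form E N v"
  unfolding laplacian_form_def laplacian_op_scale
  by (simp add: sum_distrib_left power2_eq_square algebra_simps)

lemma laplacian_form_cong:
  assumes "\<And>i. i < N \<Longrightarrow> v i = w i"
  shows "laplacian_form E N v = laplacian_form E N w"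
  unfolding laplacian_form_def laplacian_op_def using assms by (intro sum.cong) auto

lemma continuous_on_laplacian_form: "continuous_on S (laplacian_form E N)"
proof -
  have coord: "continuous_on S (\<lambda>v::nat \<Rightarrow> real. v i)" for i
    by (rule continuous_on_subset[OF continuous_on_product_coordinates]) auto
  show ?thesis
    unfolding laplacian_form_def[abs_def] laplacian_op_def
    by (intro continuous_on_sum continuous_on_mult continuous_on_diff continuous_on_const coord)
qed

context
  fixes E :: "nat \<Rightarrow> nat \<Rightarrow> bool" and N :: nat
  assumes sym: "\<And>i j. E i j \<Longrightarrow> E j i"
begin

lemma sum_mult_laplacian_op:
  "(\<Sum>i<N. w i * laplacian_op E N v i) =
     (\<Sum>i<N. \<Sum>j<N. (if E i j then 1 else 0) * ((w i - w j) * (v i - v j))) / 2"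
proof -
  let ?a = "\<lambda>i j. if E i j then 1 else 0 :: real"
  have "(\<Sum>i<N. \<Sum>j<N. ?a i j * (w j * (v j - v i))) = (\<Sum>i<N. \<Sum>j<N. ?a i j * (w i * (v i - v j)))"
    by (subst sum.swap) (auto intro!: sum.cong dest: sym)
  moreover have "(\<Sum>i<N. \<Sum>j<N. ?a i j * ((w i - w j) * (v i - v j))) =
      (\<Sum>i<N. \<Sum>j<N. ?a i j * (w i * (v i - v j))) + (\<Sum>i<N. \<Sum>j<N. ?a i j * (w j * (v j - v i)))"
    by (simp add: sum.distrib[symmetric] algebra_simps)
  ultimately show ?thesis
    unfolding laplacian_op_def by (simp add: sum_distrib_left algebra_simps)
qed

lemma laplacian_form_eq_edge_sum:
  "laplacian_form E N v = (\<Sum>i<N. \<Sum>j<N. (if E i j then 1 else 0) * (v i - v j)\<^sup>2) / 2"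
  using sum_mult_laplacian_op[of v v] unfolding laplacian_form_def by (simp add: power2_eq_square)

lemma laplacian_form_nonneg: "laplacian_form E N v \<ge> 0"
  unfolding laplacian_form_eq_edge_sum by (intro divide_nonneg_pos sum_nonneg) auto

lemma sum_mult_laplacian_op_commute:
  "(\<Sum>i<N. w i * laplacian_op E N v i) = (\<Sum>i<N. v i * laplacian_op E N w i)"
  unfolding sum_mult_laplacian_op by (simp add: algebra_simps)

lemma sum_laplacian_op: "(\<Sum>i<N. laplacian_op E N v i) = 0"
  using sum_mult_laplacian_op[of "\<lambda>_. 1" v] by simp

lemma laplacian_form_add_scaled:
  "laplacian_form E N (\<lambda>i. v i + s * w i) =
     laplacian_form E N v + 2 * s * (\<Sum>i<N. w i * laplacian_op E N v i) + s\<^sup>2 * laplacian_form E N w"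
proof -
  have "laplacian_form E N (\<lambda>i. v i + s * w i) =
      laplacian_form E N v + s * (\<Sum>i<N. v i * laplacian_op E N w i)
        + s * (\<Sum>i<N. w i * laplacian_op E N v i) + s\<^sup>2 * laplacian_form E N w"
    unfolding laplacian_form_def laplacian_op_add_scaled
    by (simp add: sum.distrib sum_distrib_left power2_eq_square algebra_simps)
  then show ?thesis
    using sum_mult_laplacian_op_commute[of v w] by simp
qed

end

lemma laplacian_form_eq_0_imp_const:
  assumes g: "undirected_connected_graph E N" and Q: "laplacian_form E N v = 0"
    and i: "i < N" and j: "j < N"
  shows "v i = v j"
proof -
  have sym: "\<And>i j. E i j \<Longrightarrow> E j i" and bnd: "\<And>i j. E i j \<Longrightarrow> i < N \<and> j < N"
    and conn: "E\<^sup>*\<^sup>* i j"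
    using g i j unfolding undirected_connected_graph_def by auto
  have "(\<Sum>i<N. \<Sum>j<N. (if E i j then 1 else 0) * (v i - v j)\<^sup>2) = 0"
    using Q laplacian_form_eq_edge_sum[OF sym] by simp
  then have "\<forall>i\<in>{..<N}. (\<Sum>j<N. (if E i j then 1 else 0) * (v i - v j)\<^sup>2) = 0"
    by (subst sum_nonneg_eq_0_iff[symmetric]) (auto intro!: sum_nonneg)
  then have edge: "E k l \<Longrightarrow> v k = v l" for k l
    using bnd[of k l] by (force simp: sum_nonneg_eq_0_iff)
  from conn show ?thesis
    by (induction rule: rtranclp_induct) (auto dest: edge)
qed

section \<open>The Laplacian matrix and the simple eigenvalue zero\<close>

lemma laplacian_carrier: "laplacian E N \<in> carrier_mat N N"
  unfolding laplacian_def by simp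

lemma real_card_nbrs: "real (card (nbrs E N i)) = (\<Sum>j<N. if E i j then 1 else 0)"
proof -
  have "nbrs E N i = {j\<in>{..<N}. E i j}"
    unfolding nbrs_def by auto
  then show ?thesis
    by (simp add: sum.inter_filter[OF finite_lessThan, symmetric])
qed

lemma sum_index_laplacian_mult:
  assumes irr: "\<not> E i i" and i: "i < N"
  shows "(\<Sum>j<N. laplacian E N $$ (i, j) * f j) = laplacian_op E N f i"
proof -
  have "(\<Sum>j<N. laplacian E N $$ (i, j) * f j) =
      (\<Sum>j<N. if i = j then real (card (nbrs E N i)) * f j else 0) - (\<Sum>j<N. (if E i j then 1 else 0) * f j)"
    unfolding laplacian_def sum_subtractf[symmetric] using i irr by (intro sum.cong) auto
  also have "(\<Sum>j<N. if i = j then real (card (nbrs E N i)) * f j else 0) = (\<Sum>j<N. (if E i j then 1 else 0) * f i)"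
    using i by (simp add: real_card_nbrs sum_distrib_right)
  finally show ?thesis
    unfolding laplacian_op_def by (simp add: sum_subtractf[symmetric] algebra_simps)
qed

lemma laplacian_mult_vec:
  assumes irr: "\<And>i. \<not> E i i"
  shows "laplacian E N *\<^sub>v vec N f = vec N (laplacian_op E N f)"
proof (rule eq_vecI)
  fix i assume "i < dim_vec (vec N (laplacian_op E N f))"
  then have i: "i < N" by simp
  have "(laplacian E N *\<^sub>v vec N f) $ i = (\<Sum>j<N. laplacian E N $$ (i, j) * f j)"
    using i laplacian_carrier[of E N] by (auto simp: scalar_prod_def row_def intro!: sum.cong)
  then show "(laplacian E N *\<^sub>v vec N f) $ i = vec N (laplacian_op E N f) $ i"
    using sum_index_laplacian_mult[of E i N f] irr i by simp
qed (use laplacian_carrier in auto)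

lemma laplacian_eigenvector_imp_root:
  assumes irr: "\<And>i. \<not> E i i"
    and eigen: "\<And>i. i < N \<Longrightarrow> laplacian_op E N f i = r * f i" and "i < N" "f i \<noteq> 0"
  shows "poly (char_poly (laplacian E N)) r = 0"
proof -
  have "eigenvector (laplacian E N) (vec N f) r"
    unfolding eigenvector_def
    using laplacian_carrier[of E N] assms by (auto simp: laplacian_mult_vec vec_eq_iff)
  then show ?thesis
    using eigenvalue_root_char_poly[OF laplacian_carrier] unfolding eigenvalue_def by blast
qed

lemma laplacian_root_nonneg:
  assumes irr: "\<And>i. \<not> E i i" and sym: "\<And>i j. E i j \<Longrightarrow> E j i"
    and root: "poly (char_poly (laplacian E N)) r = 0"
  shows "r \<ge> 0"
proof -
  obtain v where "eigenvector (laplacian E N) v r"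
    using eigenvalue_root_char_poly[OF laplacian_carrier] root unfolding eigenvalue_def by blast
  then have vc: "v \<in> carrier_vec N" and vnz: "v \<noteq> 0\<^sub>v N" and Av: "laplacian E N *\<^sub>v v = r \<cdot>\<^sub>v v"
    using laplacian_carrier[of E N] unfolding eigenvector_def by auto
  define f where "f i = v $ i" for i
  have vf: "v = vec N f"
    using vc unfolding f_def by (auto simp: vec_eq_iff)
  have eigen: "laplacian_op E N f i = r * f i" if "i < N" for i
    using Av that unfolding vf laplacian_mult_vec[OF irr] by (auto simp: vec_eq_iff)
  obtain i where "i < N" "f i \<noteq> 0"
    using vnz vf by (auto simp: vec_eq_iff)
  then have "(\<Sum>i<N. (f i)\<^sup>2) > 0"
    by (intro sum_pos2[of _ i]) auto
  moreover have "laplacian_form E N f = r * (\<Sum>i<N. (f i)\<^sup>2)"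
    unfolding laplacian_form_def by (simp add: eigen sum_distrib_left power2_eq_square algebra_simps)
  ultimately show ?thesis
    using laplacian_form_nonneg[of E N f, OF sym] by (simp add: zero_le_mult_iff)
qed

text \<open>The first column of \<^term>\<open>shear_mat N 1\<close> is the all-ones vector, which the Laplacian
  annihilates, and \<^term>\<open>shear_mat N (-1)\<close> is its inverse; conjugating by it therefore splits off
  the eigenvalue \<open>0\<close> as a \<open>1 \<times> 1\<close> block.\<close>

definition shear_mat :: "nat \<Rightarrow> real \<Rightarrow> real mat" where
  "shear_mat N s = mat N N (\<lambda>(i, j). (if i = j then 1 else 0) + (if j = 0 \<and> i \<noteq> 0 then s else 0))"

lemma shear_mat_carrier: "shear_mat N s \<in> carrier_mat N N"
  unfolding shear_mat_def by simp

lemma index_shear_mat_mult: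
  assumes B: "B \<in> carrier_mat N k" and i: "i < N" and j: "j < k"
  shows "(shear_mat N s * B) $$ (i, j) = B $$ (i, j) + (if i \<noteq> 0 then s * B $$ (0, j) else 0)"
proof -
  have "(shear_mat N s * B) $$ (i, j) = (\<Sum>l<N. shear_mat N s $$ (i, l) * B $$ (l, j))"
    using assms by (simp add: shear_mat_def scalar_prod_def atLeast0LessThan)
  also have "\<dots> = (\<Sum>l<N. (if l = i then B $$ (l, j) else 0) + (if l = 0 then (if i \<noteq> 0 then s * B $$ (l, j) else 0) else 0))"
    using i unfolding shear_mat_def by (intro sum.cong) auto
  also have "\<dots> = B $$ (i, j) + (if i \<noteq> 0 then s * B $$ (0, j) else 0)"
    using i by (simp add: sum.distrib)
  finally show ?thesis .
qed

lemma shear_mat_mult: "shear_mat N s * shear_mat N r = shear_mat N (s + r)"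
proof (rule eq_matI)
  fix i j assume "i < dim_row (shear_mat N (s + r))" and "j < dim_col (shear_mat N (s + r))"
  then have i: "i < N" and j: "j < N"
    by (simp_all add: shear_mat_def)
  show "(shear_mat N s * shear_mat N r) $$ (i, j) = shear_mat N (s + r) $$ (i, j)"
    unfolding index_shear_mat_mult[OF shear_mat_carrier i j] using i j by (auto simp: shear_mat_def)
qed (simp_all add: shear_mat_def)

lemma shear_mat_0: "shear_mat N 0 = 1\<^sub>m N"
  unfolding shear_mat_def by (rule eq_matI) auto

lemma index_laplacian_mult_shear_mat:
  assumes irr: "\<And>i. \<not> E i i" and i: "i < N" and j: "j < N"
  shows "(laplacian E N * shear_mat N 1) $$ (i, j) = (if j = 0 then 0 else laplacian E N $$ (i, j))"
proof -
  have "(laplacian E N * shear_mat N 1) $$ (i, j) = (\<Sum>l<N. laplacian E N $$ (i, l) * shear_mat N 1 $$ (l, j))"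
    using i j laplacian_carrier[of E N] shear_mat_carrier[of N 1]
    by (simp add: scalar_prod_def atLeast0LessThan)
  also have "\<dots> = (\<Sum>l<N. if j = 0 then laplacian E N $$ (i, l) else if l = j then laplacian E N $$ (i, l) else 0)"
    using j by (intro sum.cong) (auto simp: shear_mat_def)
  also have "\<dots> = (if j = 0 then 0 else laplacian E N $$ (i, j))"
    using sum_index_laplacian_mult[of E i N "\<lambda>_. 1"] irr i j by (cases "j = 0") (simp_all add: laplacian_op_def)
  finally show ?thesis .
qed

lemma similar_laplacian_shear:
  "similar_mat (laplacian E N) (shear_mat N (-1) * (laplacian E N * shear_mat N 1))"
proof -
  have L: "laplacian E N \<in> carrier_mat N N" and S: "\<And>s. shear_mat N s \<in> carrier_mat N N"
    by (rule laplacian_carrier, rule shear_mat_carrier)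
  have inv: "shear_mat N 1 * shear_mat N (-1) = 1\<^sub>m N" "shear_mat N (-1) * shear_mat N 1 = 1\<^sub>m N"
    by (simp_all add: shear_mat_mult shear_mat_0)
  have "shear_mat N 1 * (shear_mat N (-1) * (laplacian E N * shear_mat N 1))
      = (shear_mat N 1 * shear_mat N (-1)) * (laplacian E N * shear_mat N 1)"
    using L S by (simp add: assoc_mult_mat[of _ N N _ N _ N])
  then have "shear_mat N 1 * (shear_mat N (-1) * (laplacian E N * shear_mat N 1)) * shear_mat N (-1)
      = laplacian E N * shear_mat N 1 * shear_mat N (-1)"
    using L S by (simp add: inv)
  also have "\<dots> = laplacian E N"
    using L S by (simp add: assoc_mult_mat[of _ N N _ N _ N] inv)
  finally have conj: "shear_mat N 1 * (shear_mat N (-1) * (laplacian E N * shear_mat N 1)) * shear_mat N (-1)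
      = laplacian E N" .
  show ?thesis
    unfolding similar_mat_def similar_mat_wit_def Let_def
    by (rule exI[of _ "shear_mat N 1"], rule exI[of _ "shear_mat N (-1)"])
      (use L S inv conj in \<open>auto intro!: mult_carrier_mat\<close>)
qed

definition laplacian_reduced :: "(nat \<Rightarrow> nat \<Rightarrow> bool) \<Rightarrow> nat \<Rightarrow> real mat" where
  "laplacian_reduced E m = mat m m (\<lambda>(i, j).
     laplacian E (Suc m) $$ (Suc i, Suc j) - laplacian E (Suc m) $$ (0, Suc j))"

lemma laplacian_shear_block:
  assumes irr: "\<And>i. \<not> E i i"
  shows "shear_mat (Suc m) (-1) * (laplacian E (Suc m) * shear_mat (Suc m) 1) =
    four_block_mat (mat 1 1 (\<lambda>_. 0)) (mat 1 m (\<lambda>(_, j). laplacian E (Suc m) $$ (0, Suc j)))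
      (0\<^sub>m m 1) (laplacian_reduced E m)"
    (is "?L = ?R")
proof (rule eq_matI)
  have LS: "laplacian E (Suc m) * shear_mat (Suc m) 1 \<in> carrier_mat (Suc m) (Suc m)"
    using laplacian_carrier shear_mat_carrier by (rule mult_carrier_mat)
  fix i j assume "i < dim_row ?R" and "j < dim_col ?R"
  then have i: "i < Suc m" and j: "j < Suc m"
    by (auto simp: laplacian_reduced_def)
  show "?L $$ (i, j) = ?R $$ (i, j)"
    unfolding index_shear_mat_mult[OF LS i j] index_laplacian_mult_shear_mat[OF irr i j]
      index_laplacian_mult_shear_mat[OF irr zero_less_Suc j]
    using i j by (cases i; cases j) (auto simp: laplacian_reduced_def)
qed (simp_all add: shear_mat_def laplacian_reduced_def)

lemma char_poly_laplacian_factor: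
  assumes irr: "\<And>i. \<not> E i i"
  shows "char_poly (laplacian E (Suc m)) = [:0, 1:] * char_poly (laplacian_reduced E m)"
proof -
  have zero: "mat 1 1 (\<lambda>_. 0) \<in> carrier_mat 1 1"
    and row: "mat 1 m (\<lambda>(_, j). laplacian E (Suc m) $$ (0, Suc j)) \<in> carrier_mat 1 m"
    and red: "laplacian_reduced E m \<in> carrier_mat m m"
    by (simp_all add: laplacian_reduced_def)
  have "char_poly (mat 1 1 (\<lambda>_. 0) :: real mat) = [:0, 1:]"
    using char_poly_upper_triangular[OF zero] by (simp add: upper_triangular_def diag_mat_def)
  moreover have "char_poly (laplacian E (Suc m)) =
      char_poly (shear_mat (Suc m) (-1) * (laplacian E (Suc m) * shear_mat (Suc m) 1))"
    by (rule char_poly_similar[OF similar_laplacian_shear])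
  ultimately show ?thesis
    unfolding laplacian_shear_block[OF irr] char_poly_four_block_zeros_col[OF zero row red] by simp
qed

lemma laplacian_reduced_kernel:
  assumes g: "undirected_connected_graph E (Suc m)"
    and w: "\<And>i. i < m \<Longrightarrow> (\<Sum>j<m. laplacian_reduced E m $$ (i, j) * w j) = 0"
    and j: "j < m"
  shows "w j = 0"
proof -
  have sym: "\<And>i j. E i j \<Longrightarrow> E j i" and irr: "\<And>i. \<not> E i i"
    using g unfolding undirected_connected_graph_def by auto
  define f where "f k = (if k = 0 then 0 else w (k - 1))" for k
  have row: "laplacian_op E (Suc m) f k = (\<Sum>j<m. laplacian E (Suc m) $$ (k, Suc j) * w j)"
    if "k < Suc m" for k
    using sum_index_laplacian_mult[of E k "Suc m" f] irr that
    unfolding sum.lessThan_Suc_shift by (simp add: f_def)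
  have "laplacian_op E (Suc m) f (Suc i) - laplacian_op E (Suc m) f 0 =
      (\<Sum>j<m. laplacian_reduced E m $$ (i, j) * w j)" if "i < m" for i
    using that by (simp add: row laplacian_reduced_def sum_subtractf[symmetric] left_diff_distrib)
  then have const: "laplacian_op E (Suc m) f k = laplacian_op E (Suc m) f 0" if "k < Suc m" for k
    using that w by (cases k) fastforce+
  have "(\<Sum>k<Suc m. laplacian_op E (Suc m) f k) = (\<Sum>k<Suc m. laplacian_op E (Suc m) f 0)"
    by (intro sum.cong refl const) simp
  then have "real (Suc m) * laplacian_op E (Suc m) f 0 = 0"
    using sum_laplacian_op[of E "Suc m" f, OF sym] by simp
  then have "laplacian_op E (Suc m) f k = 0" if "k < Suc m" for k
    using const[OF that] by simp
  then have "laplacian_form E (Suc m) f = 0"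
    unfolding laplacian_form_def by simp
  then have "f (Suc j) = f 0"
    using laplacian_form_eq_0_imp_const[OF g, of f "Suc j" 0] j by simp
  then show ?thesis
    by (simp add: f_def)
qed

lemma poly_char_poly_laplacian_reduced_0:
  assumes g: "undirected_connected_graph E (Suc m)"
  shows "poly (char_poly (laplacian_reduced E m)) 0 \<noteq> 0"
proof
  have B: "laplacian_reduced E m \<in> carrier_mat m m"
    unfolding laplacian_reduced_def by simp
  assume "poly (char_poly (laplacian_reduced E m)) 0 = 0"
  moreover have "char_matrix (laplacian_reduced E m) 0 = laplacian_reduced E m"
    unfolding char_matrix_def using B by (intro eq_matI) auto
  ultimately have "det (- laplacian_reduced E m) = 0"
    using char_poly_matrix[OF B] by simp
  then obtain v where v: "v \<in> carrier_vec m" "v \<noteq> 0\<^sub>v m" "(- laplacian_reduced E m) *\<^sub>v v = 0\<^sub>v m"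
    using det_0_iff_vec_prod_zero[of "- laplacian_reduced E m" m] B by auto
  have "(\<Sum>j<m. laplacian_reduced E m $$ (i, j) * v $ j) = 0" if "i < m" for i
  proof -
    have "((- laplacian_reduced E m) *\<^sub>v v) $ i = - (\<Sum>j<m. laplacian_reduced E m $$ (i, j) * v $ j)"
      using that v(1) B by (auto simp: scalar_prod_def atLeast0LessThan sum_negf[symmetric])
    then show ?thesis
      using v(3) that by simp
  qed
  then have "v $ j = 0" if "j < m" for j
    using laplacian_reduced_kernel[OF g, of "\<lambda>j. v $ j"] that by blast
  then show False
    using v by (auto simp: vec_eq_iff)
qed

lemma order_0_char_poly_laplacian:
  assumes g: "undirected_connected_graph E N" and N: "N > 0"
  shows "order 0 (char_poly (laplacian E N)) = 1"
proof -
  obtain m where m: "N = Suc m"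
    using N by (cases N) auto
  have irr: "\<And>i. \<not> E i i"
    using g unfolding undirected_connected_graph_def by auto
  have nz: "poly (char_poly (laplacian_reduced E m)) 0 \<noteq> 0"
    using poly_char_poly_laplacian_reduced_0 g m by simp
  then have "[:0, 1:] * char_poly (laplacian_reduced E m) \<noteq> 0"
    by auto
  then have "order 0 ([:0, 1:] * char_poly (laplacian_reduced E m)) = order 0 [:0, 1::real:]"
    using order_mult[of "[:0, 1:]" "char_poly (laplacian_reduced E m)" 0] order_0I[OF nz] by simp
  also have "\<dots> = 1"
    using order_power_n_n[of "0::real" 1] by simp
  finally show ?thesis
    unfolding m char_poly_laplacian_factor[OF irr] .
qed

section \<open>The Courant-Fischer bound for \<open>\<lambda>\<^sub>2\<close>\<close>

lemma linear_coeff_eq_0_if_quadratic_nonneg: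
  fixes \<alpha> \<beta> :: real
  assumes nonneg: "\<And>s. 2 * s * \<beta> + s\<^sup>2 * \<alpha> \<ge> 0"
  shows "\<beta> = 0"
proof (rule ccontr)
  assume "\<beta> \<noteq> 0"
  define k where "k = \<bar>\<alpha>\<bar> + 1"
  have k: "k > 0" "\<alpha> \<le> k"
    unfolding k_def by auto
  define s where "s = - \<beta> / k"
  have "s\<^sup>2 * \<alpha> \<le> s\<^sup>2 * k"
    using k by (intro mult_left_mono) auto
  also have "\<dots> = \<beta>\<^sup>2 / k"
    unfolding s_def using k by (simp add: power2_eq_square field_simps)
  finally have "2 * s * \<beta> + s\<^sup>2 * \<alpha> \<le> - \<beta>\<^sup>2 / k"
    unfolding s_def by (simp add: power2_eq_square field_simps)
  moreover have "\<beta>\<^sup>2 / k > 0"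
    using \<open>\<beta> \<noteq> 0\<close> k by simp
  ultimately show False
    using nonneg[of s] by simp
qed

text \<open>Coordinates from \<open>N\<close> on are pinned to \<open>0\<close> so that the set is compact in the product
  topology of \<^typ>\<open>nat \<Rightarrow> real\<close>.\<close>

definition normalized_zero_sum :: "nat \<Rightarrow> (nat \<Rightarrow> real) set" where
  "normalized_zero_sum N = (\<Pi>\<^sub>E i\<in>UNIV. if i < N then {-1..1} else {0})
     \<inter> {v. (\<Sum>i<N. v i) = 0} \<inter> {v. (\<Sum>i<N. (v i)\<^sup>2) = 1}"

lemma compact_normalized_zero_sum: "compact (normalized_zero_sum N)"
proof -
  have "compactin (product_topology (\<lambda>i. euclidean) UNIV)
      (\<Pi>\<^sub>E i\<in>UNIV. if i < N then {-1..(1::real)} else {0})"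
    by (subst compactin_PiE) auto
  then have "compact (\<Pi>\<^sub>E i\<in>UNIV. if i < N then {-1..(1::real)} else {0})"
    unfolding euclidean_product_topology by simp
  moreover have "closed {v::nat \<Rightarrow> real. (\<Sum>i<N. v i) = 0}"
    by (intro closed_Collect_eq continuous_on_sum continuous_on_const) simp
  moreover have "closed {v::nat \<Rightarrow> real. (\<Sum>i<N. (v i)\<^sup>2) = 1}"
    by (intro closed_Collect_eq continuous_on_sum continuous_on_power continuous_on_const) simp
  ultimately show ?thesis
    unfolding normalized_zero_sum_def by (intro compact_Int_closed)
qed

lemma normalized_zero_sum_nonempty:
  assumes N: "N \<ge> 2"
  shows "normalized_zero_sum N \<noteq> {}"
proof -
  define a :: real where "a = 1 / sqrt 2"
  have a: "a\<^sup>2 = 1 / 2" "\<bar>a\<bar> \<le> 1"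
    unfolding a_def by (simp_all add: power_divide abs_div_pos)
  define v where "v i = (if i = 0 then a else 0) + (if i = 1 then - a else 0)" for i :: nat
  have "(\<Sum>i<N. v i) = 0"
    unfolding v_def sum.distrib using N by (simp add: sum.delta')
  moreover have "(\<Sum>i<N. (v i)\<^sup>2) = (\<Sum>i<N. (if i = 0 then a\<^sup>2 else 0) + (if i = 1 then a\<^sup>2 else 0))"
    unfolding v_def by (intro sum.cong) auto
  then have "(\<Sum>i<N. (v i)\<^sup>2) = 1"
    unfolding sum.distrib using N a by (simp add: sum.delta')
  ultimately have "v \<in> normalized_zero_sum N"
    unfolding normalized_zero_sum_def using a N by (auto simp: v_def PiE_iff abs_le_iff)
  then show ?thesis
    by auto
qed

lemma laplacian_form_ge_min_normalized:
  assumes min: "\<And>y. y \<in> normalized_zero_sum N \<Longrightarrow> \<mu> \<le> laplacian_form E N y"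
    and u: "(\<Sum>i<N. u i) = 0"
  shows "\<mu> * (\<Sum>i<N. (u i)\<^sup>2) \<le> laplacian_form E N u"
proof (cases "(\<Sum>i<N. (u i)\<^sup>2) = 0")
  case True
  then have "\<forall>i\<in>{..<N}. (u i)\<^sup>2 = 0"
    by (subst sum_nonneg_eq_0_iff[symmetric]) auto
  then have "laplacian_form E N u = laplacian_form E N (\<lambda>i. 0 * u i)"
    by (intro laplacian_form_cong) auto
  then show ?thesis
    using True laplacian_form_scale[of E N 0 u] by simp
next
  case False
  define S where "S = (\<Sum>i<N. (u i)\<^sup>2)"
  have S: "S > 0"
    using False unfolding S_def by (simp add: order.not_eq_order_implies_strict sum_nonneg)
  define u' where "u' i = (if i < N then u i / sqrt S else 0)" for i
  have u_le: "\<bar>u i\<bar> \<le> sqrt S" if "i < N" for i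
  proof -
    have "(u i)\<^sup>2 \<le> S"
      unfolding S_def using that by (intro member_le_sum) auto
    then have "sqrt ((u i)\<^sup>2) \<le> sqrt S"
      by (rule real_sqrt_le_mono)
    then show ?thesis
      by simp
  qed
  have "u' i \<in> (if i < N then {-1..1} else {0})" for i
  proof (cases "i < N")
    case True
    have "\<bar>u' i\<bar> = \<bar>u i\<bar> / sqrt S"
      using True S by (simp add: u'_def abs_divide)
    also have "\<dots> \<le> 1"
      using u_le[OF True] S by (simp add: divide_le_eq)
    finally have "\<bar>u' i\<bar> \<le> 1" .
    then show ?thesis
      using True by (simp add: abs_le_iff)
  qed (simp add: u'_def)
  moreover have "(\<Sum>i<N. u' i) = (\<Sum>i<N. u i / sqrt S)"
    by (intro sum.cong) (auto simp: u'_def)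
  moreover have "(\<Sum>i<N. (u' i)\<^sup>2) = (\<Sum>i<N. (u i)\<^sup>2 / S)"
    using S by (intro sum.cong) (auto simp: u'_def power_divide)
  ultimately have "u' \<in> normalized_zero_sum N"
    using u S unfolding normalized_zero_sum_def S_def
    by (simp add: sum_divide_distrib[symmetric] PiE_iff)
  then have "\<mu> \<le> laplacian_form E N u'"
    by (rule min)
  also have "laplacian_form E N u' = laplacian_form E N (\<lambda>i. (1 / sqrt S) * u i)"
    by (intro laplacian_form_cong) (simp add: u'_def)
  also have "\<dots> = laplacian_form E N u / S"
    using S laplacian_form_scale[of E N "1 / sqrt S" u] by (simp add: power_divide)
  finally show ?thesis
    using S unfolding S_def by (simp add: le_divide_eq mult.commute)
qed

text \<open>Perturbing the minimiser along the residual \<open>w = L v\<^sub>0 - \<mu> v\<^sub>0\<close> changes the excess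
  \<open>Q(v) - \<mu> |v|\<^sup>2\<close>, which is nonnegative and vanishes at \<open>v\<^sub>0\<close>, to first order by \<open>2 s |w|\<^sup>2\<close>;
  hence \<open>w = 0\<close>.\<close>

lemma laplacian_minimizer_eigen:
  assumes sym: "\<And>i j. E i j \<Longrightarrow> E j i"
    and v0: "(\<Sum>i<N. v0 i) = 0" "(\<Sum>i<N. (v0 i)\<^sup>2) = 1"
    and bound: "\<And>u. (\<Sum>i<N. u i) = 0 \<Longrightarrow> laplacian_form E N v0 * (\<Sum>i<N. (u i)\<^sup>2) \<le> laplacian_form E N u"
    and i: "i < N"
  shows "laplacian_op E N v0 i = laplacian_form E N v0 * v0 i"
proof -
  define \<mu> where "\<mu> = laplacian_form E N v0"
  define w where "w i = laplacian_op E N v0 i - \<mu> * v0 i" for i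
  have w_sum: "(\<Sum>i<N. w i) = 0"
    using sum_laplacian_op[of E N v0, OF sym] v0
    by (simp add: w_def sum_subtractf sum_distrib_left[symmetric])
  have w_cross: "(\<Sum>i<N. w i * laplacian_op E N v0 i) - \<mu> * (\<Sum>i<N. v0 i * w i) = (\<Sum>i<N. (w i)\<^sup>2)"
    unfolding sum_distrib_left sum_subtractf[symmetric]
    by (intro sum.cong) (auto simp: w_def power2_eq_square algebra_simps)
  have excess: "2 * s * (\<Sum>i<N. (w i)\<^sup>2) + s\<^sup>2 * (laplacian_form E N w - \<mu> * (\<Sum>i<N. (w i)\<^sup>2)) \<ge> 0" for s
  proof -
    have "(\<Sum>i<N. v0 i + s * w i) = 0"
      using v0 w_sum by (simp add: sum.distrib sum_distrib_left[symmetric])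
    then have "\<mu> * (\<Sum>i<N. (v0 i + s * w i)\<^sup>2) \<le> laplacian_form E N (\<lambda>i. v0 i + s * w i)"
      unfolding \<mu>_def by (rule bound)
    moreover have "(\<Sum>i<N. (v0 i + s * w i)\<^sup>2) = 1 + 2 * s * (\<Sum>i<N. v0 i * w i) + s\<^sup>2 * (\<Sum>i<N. (w i)\<^sup>2)"
      using v0 by (simp add: power2_sum sum.distrib sum_distrib_left power_mult_distrib algebra_simps)
    moreover have "laplacian_form E N (\<lambda>i. v0 i + s * w i) = \<mu>
        + 2 * s * (\<Sum>i<N. w i * laplacian_op E N v0 i) + s\<^sup>2 * laplacian_form E N w"
      unfolding \<mu>_def by (rule laplacian_form_add_scaled[of E N v0 s w, OF sym])
    ultimately show ?thesis
      using w_cross by (simp add: algebra_simps)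
  qed
  have "(\<Sum>i<N. (w i)\<^sup>2) = 0"
    by (rule linear_coeff_eq_0_if_quadratic_nonneg[OF excess])
  then have "w i = 0"
    using i by (subst (asm) sum_nonneg_eq_0_iff) auto
  then show ?thesis
    unfolding w_def \<mu>_def by simp
qed

lemma exists_pos_laplacian_root_form_bound:
  assumes g: "undirected_connected_graph E N" and N2: "N \<ge> 2"
  shows "\<exists>\<mu>>0. poly (char_poly (laplacian E N)) \<mu> = 0 \<and>
           (\<forall>u. (\<Sum>i<N. u i) = 0 \<longrightarrow> \<mu> * (\<Sum>i<N. (u i)\<^sup>2) \<le> laplacian_form E N u)"
proof -
  have sym: "\<And>i j. E i j \<Longrightarrow> E j i" and irr: "\<And>i. \<not> E i i"
    using g unfolding undirected_connected_graph_def by auto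
  obtain v0 where v0: "v0 \<in> normalized_zero_sum N"
    and min: "\<And>y. y \<in> normalized_zero_sum N \<Longrightarrow> laplacian_form E N v0 \<le> laplacian_form E N y"
    using continuous_attains_inf[OF compact_normalized_zero_sum normalized_zero_sum_nonempty[OF N2]
        continuous_on_laplacian_form] by blast
  define \<mu> where "\<mu> = laplacian_form E N v0"
  have v0_sum: "(\<Sum>i<N. v0 i) = 0" and v0_norm: "(\<Sum>i<N. (v0 i)\<^sup>2) = 1"
    using v0 unfolding normalized_zero_sum_def by auto
  have bound: "\<mu> * (\<Sum>i<N. (u i)\<^sup>2) \<le> laplacian_form E N u" if "(\<Sum>i<N. u i) = 0" for u
    unfolding \<mu>_def using min that by (rule laplacian_form_ge_min_normalized)
  have "\<not> (\<forall>i<N. v0 i = 0)"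
  proof
    assume "\<forall>i<N. v0 i = 0"
    then have "(\<Sum>i<N. (v0 i)\<^sup>2) = 0"
      by simp
    then show False
      using v0_norm by simp
  qed
  then obtain i0 where i0: "i0 < N" "v0 i0 \<noteq> 0"
    by auto
  have eigen: "laplacian_op E N v0 i = \<mu> * v0 i" if "i < N" for i
    using laplacian_minimizer_eigen[of E v0 N i, OF sym v0_sum v0_norm _ that] bound
    unfolding \<mu>_def by blast
  have "\<mu> \<noteq> 0"
  proof
    assume "\<mu> = 0"
    then have const: "v0 i = v0 0" if "i < N" for i
      using laplacian_form_eq_0_imp_const[OF g, of v0 i 0] that N2 unfolding \<mu>_def by auto
    have "(\<Sum>i<N. v0 i) = (\<Sum>i<N. v0 0)"
      by (intro sum.cong refl const) simp
    then have "v0 0 = 0"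
      using v0_sum N2 by simp
    then show False
      using const[OF i0(1)] i0(2) by simp
  qed
  then have "\<mu> > 0"
    using laplacian_form_nonneg[of E N v0, OF sym] unfolding \<mu>_def by simp
  then show ?thesis
    using laplacian_eigenvector_imp_root[OF irr eigen i0] bound by blast
qed

lemma lambda2_pos_le_root:
  assumes g: "undirected_connected_graph E N" and N2: "N \<ge> 2"
    and \<mu>: "\<mu> > 0" "poly (char_poly (laplacian E N)) \<mu> = 0"
  shows "0 < lambda2 E N \<and> lambda2 E N \<le> \<mu>"
proof -
  have sym: "\<And>i j. E i j \<Longrightarrow> E j i" and irr: "\<And>i. \<not> E i i"
    using g unfolding undirected_connected_graph_def by auto
  define p where "p = char_poly (laplacian E N)"
  have "coeff p N = 1"
    unfolding p_def using degree_monic_char_poly[OF laplacian_carrier] by blast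
  then have p: "p \<noteq> 0"
    by auto
  define xs where "xs = sorted_list_of_multiset (proots p)"
  have l2: "lambda2 E N = xs ! 1"
    unfolding lambda2_def sorted_eigenvalues_def xs_def p_def ..
  have sorted: "sorted xs" and mset_xs: "mset xs = proots p"
    unfolding xs_def by simp_all
  have set_xs: "set xs = {x. poly p x = 0}"
    using p by (metis mset_xs set_count_proots set_mset_mset)
  have count_0: "count (mset xs) 0 = 1"
    unfolding mset_xs using p order_0_char_poly_laplacian[OF g] N2 by (simp add: p_def)
  have nonneg: "x \<ge> 0" if "x \<in> set xs" for x
    using that set_xs laplacian_root_nonneg[of E N x, OF irr sym] unfolding p_def by auto
  have "poly p 0 = 0"
    unfolding p_def
    by (rule laplacian_eigenvector_imp_root[where f = "\<lambda>_. 1" and i = 0, OF irr])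
      (use N2 in \<open>auto simp: laplacian_op_def\<close>)
  then have "0 \<in> set xs"
    using set_xs by simp
  then obtain j where j: "j < length xs" "xs ! j = 0"
    by (auto simp: in_set_conv_nth)
  have "\<mu> \<in> set xs"
    using set_xs \<mu>(2) unfolding p_def by simp
  then obtain k where k: "k < length xs" "xs ! k = \<mu>"
    by (auto simp: in_set_conv_nth)
  have "k \<noteq> 0"
  proof
    assume "k = 0"
    then show False
      using sorted_nth_mono[OF sorted, of 0 j] j k \<mu>(1) by simp
  qed
  then have len: "length xs \<ge> 2" and le: "xs ! 1 \<le> \<mu>"
    using k sorted_nth_mono[OF sorted, of 1 k] by auto
  have "xs ! 1 > 0"
  proof (rule ccontr)
    assume "\<not> xs ! 1 > 0"
    moreover have "xs \<noteq> []"
      using len by auto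
    ultimately have "xs ! 1 = 0" and "xs ! 0 = 0"
      using nonneg[OF nth_mem[of 0 xs]] nonneg[OF nth_mem[of 1 xs]] sorted_nth_mono[OF sorted, of 0 1] len
      by auto
    moreover obtain a b ys where "xs = a # b # ys"
      using len by (cases xs; cases "tl xs") auto
    ultimately have "count (mset xs) 0 \<ge> 2"
      by simp
    then show False
      using count_0 by simp
  qed
  then show ?thesis
    using l2 le by simp
qed

lemma lambda2_pos:
  assumes "undirected_connected_graph E N" and "N \<ge> 2"
  shows "lambda2 E N > 0"
  using exists_pos_laplacian_root_form_bound[OF assms] lambda2_pos_le_root[OF assms] by blast

lemma laplacian_form_ge_lambda2:
  assumes "undirected_connected_graph E N" and "N \<ge> 2" and u: "(\<Sum>i<N. u i) = 0"
  shows "lambda2 E N * (\<Sum>i<N. (u i)\<^sup>2) \<le> laplacian_form E N u"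
proof -
  obtain \<mu> where \<mu>: "\<mu> > 0" "poly (char_poly (laplacian E N)) \<mu> = 0"
    and bound: "\<mu> * (\<Sum>i<N. (u i)\<^sup>2) \<le> laplacian_form E N u"
    using exists_pos_laplacian_root_form_bound[OF assms(1,2)] u by blast
  have "lambda2 E N * (\<Sum>i<N. (u i)\<^sup>2) \<le> \<mu> * (\<Sum>i<N. (u i)\<^sup>2)"
    using lambda2_pos_le_root[OF assms(1,2) \<mu>] by (intro mult_right_mono sum_nonneg) auto
  then show ?thesis
    using bound by simp
qed

section \<open>The spectral norm bound for \<open>\<lambda>\<^sub>G\<close>\<close>

lemma bdd_above_spec_norm_set:
  "bdd_above {sqrt (\<Sum>r\<in>Rw. (\<Sum>c\<in>Cl. A r c * v c)\<^sup>2) | v. (\<Sum>c\<in>Cl. (v c)\<^sup>2) \<le> 1}"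
proof (rule bdd_aboveI)
  fix y assume "y \<in> {sqrt (\<Sum>r\<in>Rw. (\<Sum>c\<in>Cl. A r c * v c)\<^sup>2) | v. (\<Sum>c\<in>Cl. (v c)\<^sup>2) \<le> 1}"
  then obtain v where y: "y = sqrt (\<Sum>r\<in>Rw. (\<Sum>c\<in>Cl. A r c * v c)\<^sup>2)" and v: "(\<Sum>c\<in>Cl. (v c)\<^sup>2) \<le> 1"
    by blast
  have "(\<Sum>c\<in>Cl. A r c * v c)\<^sup>2 \<le> (\<Sum>c\<in>Cl. (A r c)\<^sup>2)" for r
  proof -
    have "(\<Sum>c\<in>Cl. A r c * v c)\<^sup>2 \<le> (\<Sum>c\<in>Cl. (A r c)\<^sup>2) * (\<Sum>c\<in>Cl. (v c)\<^sup>2)"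
      by (rule Cauchy_Schwarz_ineq_sum)
    also have "\<dots> \<le> (\<Sum>c\<in>Cl. (A r c)\<^sup>2)"
      using mult_left_mono[OF v, of "\<Sum>c\<in>Cl. (A r c)\<^sup>2"] by (simp add: sum_nonneg)
    finally show ?thesis .
  qed
  then show "y \<le> sqrt (\<Sum>r\<in>Rw. \<Sum>c\<in>Cl. (A r c)\<^sup>2)"
    unfolding y by (intro real_sqrt_le_mono sum_mono)
qed

lemma sum_sq_mult_le_spec_norm:
  "(\<Sum>r\<in>Rw. (\<Sum>c\<in>Cl. A r c * e c)\<^sup>2) \<le> (spec_norm Rw Cl A)\<^sup>2 * (\<Sum>c\<in>Cl. (e c)\<^sup>2)"
proof (cases "(\<Sum>c\<in>Cl. (e c)\<^sup>2) = 0")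
  case True
  have "(\<Sum>c\<in>Cl. A r c * e c) = 0" for r
  proof (cases "finite Cl")
    case True
    then have "\<forall>c\<in>Cl. (e c)\<^sup>2 = 0"
      using \<open>(\<Sum>c\<in>Cl. (e c)\<^sup>2) = 0\<close> by (subst sum_nonneg_eq_0_iff[symmetric]) auto
    then show ?thesis
      by simp
  qed simp
  then show ?thesis
    using True by simp
next
  case False
  define s where "s = (\<Sum>c\<in>Cl. (e c)\<^sup>2)"
  have s: "s > 0"
    using False unfolding s_def by (simp add: order.not_eq_order_implies_strict sum_nonneg)
  have "(\<Sum>c\<in>Cl. (e c / sqrt s)\<^sup>2) = (\<Sum>c\<in>Cl. (e c)\<^sup>2) / s"
    using s by (simp add: power_divide sum_divide_distrib)
  then have unit: "(\<Sum>c\<in>Cl. (e c / sqrt s)\<^sup>2) \<le> 1"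
    using s unfolding s_def by simp
  have "sqrt (\<Sum>r\<in>Rw. (\<Sum>c\<in>Cl. A r c * (e c / sqrt s))\<^sup>2) \<le> spec_norm Rw Cl A"
    unfolding spec_norm_def by (rule cSup_upper[OF _ bdd_above_spec_norm_set], rule CollectI,
        rule exI[of _ "\<lambda>c. e c / sqrt s"]) (use unit in simp)
  moreover have "(\<Sum>r\<in>Rw. (\<Sum>c\<in>Cl. A r c * (e c / sqrt s))\<^sup>2) = (\<Sum>r\<in>Rw. (\<Sum>c\<in>Cl. A r c * e c)\<^sup>2) / s"
    using s by (simp add: sum_divide_distrib[symmetric] power_divide)
  ultimately have "(\<Sum>r\<in>Rw. (\<Sum>c\<in>Cl. A r c * e c)\<^sup>2) / s \<le> (spec_norm Rw Cl A)\<^sup>2"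
    by (simp add: sqrt_le_D)
  then show ?thesis
    using s unfolding s_def by (simp add: divide_le_eq)
qed

lemma finite_nbrs: "finite (nbrs E N i)"
  unfolding nbrs_def by simp

lemma sum_pairs: "(\<Sum>p\<in>pairs E N. f p) = (\<Sum>i<N. \<Sum>j\<in>nbrs E N i. f (i, j))"
proof -
  have "pairs E N = Sigma {..<N} (nbrs E N)"
    unfolding pairs_def by auto
  then show ?thesis
    by (simp add: sum.Sigma finite_nbrs)
qed

lemma sum_sq_centered_out_sums_le_lambdaG:
  "(\<Sum>k<N. ((\<Sum>j\<in>nbrs E N k. e (k, j)) - 1 / real N * (\<Sum>p\<in>pairs E N. e p))\<^sup>2)
     \<le> lambdaG E N * (\<Sum>p\<in>pairs E N. (e p)\<^sup>2)"
proof -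
  have "(\<Sum>p\<in>pairs E N. (\<Sum>l<N. JN N k l * Wmat l p) * e p) =
      (\<Sum>j\<in>nbrs E N k. e (k, j)) - 1 / real N * (\<Sum>p\<in>pairs E N. e p)" if k: "k < N" for k
  proof -
    have "(\<Sum>l<N. JN N k l * Wmat l p) = (if fst p = k then 1 else 0) - 1 / real N" if "p \<in> pairs E N" for p
    proof -
      have "fst p < N"
        using that unfolding pairs_def by auto
      have "(\<Sum>l<N. JN N k l * Wmat l p) = (\<Sum>l<N. if l = fst p then JN N k l else 0)"
        unfolding Wmat_def by (intro sum.cong) auto
      also have "\<dots> = JN N k (fst p)"
        using \<open>fst p < N\<close> by simp
      finally show ?thesis
        unfolding JN_def by auto
    qed
    then have "(\<Sum>p\<in>pairs E N. (\<Sum>l<N. JN N k l * Wmat l p) * e p) =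
        (\<Sum>p\<in>pairs E N. if fst p = k then e p else 0) - (\<Sum>p\<in>pairs E N. 1 / real N * e p)"
      unfolding sum_subtractf[symmetric] by (intro sum.cong) (auto simp: left_diff_distrib)
    also have "(\<Sum>p\<in>pairs E N. if fst p = k then e p else 0) =
        (\<Sum>i<N. if i = k then (\<Sum>j\<in>nbrs E N i. e (i, j)) else 0)"
      unfolding sum_pairs by (intro sum.cong) auto
    also have "\<dots> = (\<Sum>j\<in>nbrs E N k. e (k, j))"
      using k by simp
    finally show ?thesis
      by (simp add: sum_distrib_left)
  qed
  then have "(\<Sum>k<N. ((\<Sum>j\<in>nbrs E N k. e (k, j)) - 1 / real N * (\<Sum>p\<in>pairs E N. e p))\<^sup>2)
      = (\<Sum>k\<in>{..<N}. (\<Sum>p\<in>pairs E N. (\<Sum>l<N. JN N k l * Wmat l p) * e p)\<^sup>2)"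
    by simp
  also have "\<dots> \<le> lambdaG E N * (\<Sum>p\<in>pairs E N. (e p)\<^sup>2)"
    unfolding lambdaG_def by (rule sum_sq_mult_le_spec_norm)
  finally show ?thesis .
qed

section \<open>One step of the consensus recursion\<close>

definition disagreement :: "nat \<Rightarrow> (nat \<Rightarrow> real) \<Rightarrow> real" where
  "disagreement N y = (\<Sum>i<N. (y i - 1 / real N * (\<Sum>l<N. y l))\<^sup>2)"

definition tracking_error ::
    "(nat \<Rightarrow> nat \<Rightarrow> bool) \<Rightarrow> nat \<Rightarrow> (nat \<Rightarrow> nat \<Rightarrow> real) \<Rightarrow> (nat \<Rightarrow> real) \<Rightarrow> real" where
  "tracking_error E N z y = (\<Sum>i<N. \<Sum>j\<in>nbrs E N i. (z i j - y j)\<^sup>2)"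

lemma sum_deviation_eq_0: "(\<Sum>i<N. y i - 1 / real N * (\<Sum>l<N. y l)) = 0"
  by (cases "N = 0") (simp_all add: sum_subtractf)

lemma disagreement_le_sum_sq: "disagreement N y \<le> (\<Sum>i<N. (y i)\<^sup>2)"
proof -
  define m where "m = 1 / real N * (\<Sum>l<N. y l)"
  have "disagreement N y = (\<Sum>i<N. (y i)\<^sup>2) - 2 * m * (\<Sum>i<N. y i) + real N * m\<^sup>2"
    unfolding disagreement_def m_def[symmetric]
    by (simp add: power2_diff sum.distrib sum_subtractf sum_distrib_left ac_simps)
  also have "\<dots> = (\<Sum>i<N. (y i)\<^sup>2) - real N * m\<^sup>2"
    unfolding m_def by (cases "N = 0") (simp_all add: power2_eq_square)
  finally show ?thesis
    by simp
qed

lemma disagreement_step_expand: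
  assumes step: "\<And>i. i < N \<Longrightarrow> y' i = y i + h * D i"
  shows "disagreement N y' = disagreement N y
    + 2 * h * (\<Sum>i<N. (y i - 1 / real N * (\<Sum>l<N. y l)) * D i) + h\<^sup>2 * disagreement N D"
proof -
  define v where "v i = y i - 1 / real N * (\<Sum>l<N. y l)" for i
  define w where "w i = D i - 1 / real N * (\<Sum>l<N. D l)" for i
  have "(\<Sum>l<N. y' l) = (\<Sum>l<N. y l) + h * (\<Sum>l<N. D l)"
    by (simp add: step sum.distrib sum_distrib_left)
  then have dev: "y' i - 1 / real N * (\<Sum>l<N. y' l) = v i + h * w i" if "i < N" for i
    using step[OF that] by (simp add: v_def w_def algebra_simps)
  have "(\<Sum>i<N. v i * w i) = (\<Sum>i<N. v i * D i) - (1 / real N * (\<Sum>l<N. D l)) * (\<Sum>i<N. v i)"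
    unfolding w_def right_diff_distrib sum_subtractf sum_distrib_right[symmetric] by (simp add: mult.commute)
  also have "(\<Sum>i<N. v i) = 0"
    unfolding v_def by (rule sum_deviation_eq_0)
  finally have cross: "(\<Sum>i<N. v i * w i) = (\<Sum>i<N. v i * D i)"
    by simp
  have "disagreement N y' = (\<Sum>i<N. (v i + h * w i)\<^sup>2)"
    unfolding disagreement_def using dev by (intro sum.cong refl) (simp only: lessThan_iff)
  also have "\<dots> = (\<Sum>i<N. (v i)\<^sup>2) + 2 * h * (\<Sum>i<N. v i * w i) + h\<^sup>2 * (\<Sum>i<N. (w i)\<^sup>2)"
    by (simp add: power2_sum power_mult_distrib sum.distrib sum_distrib_left algebra_simps)
  finally show ?thesis
    unfolding cross unfolding v_def w_def disagreement_def .
qed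

lemma consensus_cross_term_le:
  assumes g: "undirected_connected_graph E N" and N2: "N \<ge> 2"
  shows "2 * (\<Sum>i<N. (y i - 1 / real N * (\<Sum>l<N. y l)) * (\<Sum>j\<in>nbrs E N i. z i j - y i))
    \<le> - lambda2 E N * disagreement N y + lambdaG E N / lambda2 E N * tracking_error E N z y"
proof -
  define lam where "lam = lambda2 E N"
  have lam: "lam > 0"
    unfolding lam_def by (rule lambda2_pos[OF g N2])
  define v where "v i = y i - 1 / real N * (\<Sum>l<N. y l)" for i
  define e where "e p = z (fst p) (snd p) - y (snd p)" for p
  define g where "g i = (\<Sum>j\<in>nbrs E N i. e (i, j)) - 1 / real N * (\<Sum>p\<in>pairs E N. e p)" for i
  have v_sum: "(\<Sum>i<N. v i) = 0"
    unfolding v_def by (rule sum_deviation_eq_0)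
  have "(\<Sum>j\<in>nbrs E N i. z i j - y i) = (\<Sum>j\<in>nbrs E N i. e (i, j)) - laplacian_op E N v i" for i
    unfolding laplacian_op_nbrs v_def laplacian_op_shift e_def by (simp add: sum_subtractf[symmetric])
  then have "(\<Sum>i<N. v i * (\<Sum>j\<in>nbrs E N i. z i j - y i)) =
      (\<Sum>i<N. v i * (\<Sum>j\<in>nbrs E N i. e (i, j))) - laplacian_form E N v"
    unfolding laplacian_form_def by (simp add: right_diff_distrib sum_subtractf)
  also have "(\<Sum>i<N. v i * (\<Sum>j\<in>nbrs E N i. e (i, j))) = (\<Sum>i<N. v i * g i)"
    unfolding g_def right_diff_distrib sum_subtractf sum_distrib_right[symmetric] using v_sum by simp
  finally have split: "(\<Sum>i<N. v i * (\<Sum>j\<in>nbrs E N i. z i j - y i)) = (\<Sum>i<N. v i * g i) - laplacian_form E N v" .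
  have young_pointwise: "2 * v i * g i \<le> lam * (v i)\<^sup>2 + (g i)\<^sup>2 / lam" for i
    using sum_squares_bound[of "sqrt lam * v i" "g i / sqrt lam"] lam
    by (simp add: power_mult_distrib power_divide)
  have "2 * (\<Sum>i<N. v i * g i) = (\<Sum>i<N. 2 * v i * g i)"
    by (simp add: sum_distrib_left mult.assoc)
  also have "\<dots> \<le> (\<Sum>i<N. lam * (v i)\<^sup>2 + (g i)\<^sup>2 / lam)"
    by (intro sum_mono young_pointwise)
  also have "\<dots> = lam * disagreement N y + (\<Sum>i<N. (g i)\<^sup>2) / lam"
    unfolding disagreement_def v_def by (simp add: sum.distrib sum_distrib_left sum_divide_distrib)
  finally have "2 * (\<Sum>i<N. v i * g i) \<le> lam * disagreement N y + (\<Sum>i<N. (g i)\<^sup>2) / lam" .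
  moreover have "(\<Sum>i<N. (g i)\<^sup>2) \<le> lambdaG E N * tracking_error E N z y"
    using sum_sq_centered_out_sums_le_lambdaG[where e = e and E = E and N = N]
    unfolding g_def tracking_error_def sum_pairs e_def by simp
  ultimately have young: "2 * (\<Sum>i<N. v i * g i) \<le> lam * disagreement N y + lambdaG E N / lam * tracking_error E N z y"
    using lam divide_right_mono[of "\<Sum>i<N. (g i)\<^sup>2" "lambdaG E N * tracking_error E N z y" lam] by simp
  have "lam * disagreement N y \<le> laplacian_form E N v"
    using laplacian_form_ge_lambda2[OF g N2 v_sum] unfolding lam_def disagreement_def v_def .
  then show ?thesis
    using split young unfolding lam_def v_def by simp
qed

lemma disagreement_consensus_step_le:
  assumes g: "undirected_connected_graph E N" and N2: "N \<ge> 2" and h: "h \<ge> 0"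
    and step: "\<And>i. i < N \<Longrightarrow> y' i = y i + h * (\<Sum>j\<in>nbrs E N i. z i j - y i)"
  shows "disagreement N y' \<le> (1 - h * lambda2 E N) * disagreement N y
    + h * lambdaG E N / lambda2 E N * tracking_error E N z y
    + h\<^sup>2 * (\<Sum>i<N. (\<Sum>j\<in>nbrs E N i. z i j - y i)\<^sup>2)"
proof -
  define D where "D i = (\<Sum>j\<in>nbrs E N i. z i j - y i)" for i
  have "disagreement N y' = disagreement N y
      + h * (2 * (\<Sum>i<N. (y i - 1 / real N * (\<Sum>l<N. y l)) * D i)) + h\<^sup>2 * disagreement N D"
    using disagreement_step_expand[of N y' y h D] step unfolding D_def by simp
  also have "\<dots> \<le> disagreement N y
      + h * (- lambda2 E N * disagreement N y + lambdaG E N / lambda2 E N * tracking_error E N z y)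
      + h\<^sup>2 * (\<Sum>i<N. (D i)\<^sup>2)"
    unfolding D_def using consensus_cross_term_le[OF g N2, of y z] disagreement_le_sum_sq h
    by (intro add_mono mult_left_mono) auto
  finally show ?thesis
    unfolding D_def by (simp add: algebra_simps)
qed

section \<open>The closed-loop system\<close>

lemma card_nbrs_le: "card (nbrs E N i) \<le> N"
  unfolding nbrs_def by (rule order_trans[OF card_mono[of "{..<N}"]]) auto

lemma card_nbrs_le_dmax: "i < N \<Longrightarrow> card (nbrs E N i) \<le> dmax E N"
  unfolding dmax_def by (intro Max_ge) auto

text \<open>The gain \<open>K\<^sub>1\<close> is chosen so that, in closed loop, the compressed output \<open>K\<^sub>2 x\<close> evolves as a
  pure integrator of the input.\<close>

lemma K2_sys_step:
  assumes "n \<ge> 2"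
  shows "rowmul n (K2 n b) (sys_step n a v w) = rowmul n (K2 n b) v - rowmul n (K1 n a b) v + w"
proof -
  obtain m where n: "n = Suc m" and m: "m \<ge> 1"
    using assms by (cases n) auto
  have "rowmul n (K2 n b) (sys_step n a v w) = (\<Sum>k=1..m. K2 n b k * sys_step n a v w k) + K2 n b n * sys_step n a v w n"
    unfolding rowmul_def n using m by (simp add: sum.cl_ivl_Suc)
  also have "(\<Sum>k=1..m. K2 n b k * sys_step n a v w k) = (\<Sum>k=1..m. b k * v (Suc k))"
    using n by (intro sum.cong) (auto simp: K2_def sys_step_def)
  also have "K2 n b n * sys_step n a v w n = (\<Sum>l=1..n. a l * v l) + w"
    by (simp add: K2_def sys_step_def)
  finally have out: "rowmul n (K2 n b) (sys_step n a v w) = (\<Sum>k=1..m. b k * v (Suc k)) + (\<Sum>l=1..n. a l * v l) + w"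
    by simp
  have "K2 n b k - K1 n a b k = a k + (if k = 1 then 0 else b (k - 1))" if "k \<in> {1..n}" for k
    using that n m by (auto simp: K2_def K1_def)
  then have "rowmul n (K2 n b) v - rowmul n (K1 n a b) v = (\<Sum>k=1..n. a k * v k + (if k = 1 then 0 else b (k - 1)) * v k)"
    unfolding rowmul_def sum_subtractf[symmetric] left_diff_distrib[symmetric] by (intro sum.cong) (auto simp: distrib_right)
  also have "\<dots> = (\<Sum>l=1..n. a l * v l) + (\<Sum>k=Suc 1..Suc m. b (k - 1) * v k)"
    unfolding sum.distrib using n by (simp add: sum.atLeast_Suc_atMost)
  also have "(\<Sum>k=Suc 1..Suc m. b (k - 1) * v k) = (\<Sum>k=1..m. b k * v (Suc k))"
    by (subst sum.shift_bounds_cl_Suc_ivl) simp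
  finally show ?thesis
    using out by simp
qed

lemma abs_consensus_update_le:
  fixes y M s :: real
  assumes s: "s \<ge> 0" "s * real (card S) \<le> 1" and y: "\<bar>y\<bar> \<le> M" and z: "\<And>j. j \<in> S \<Longrightarrow> \<bar>z j\<bar> \<le> M"
  shows "\<bar>y + s * (\<Sum>j\<in>S. z j - y)\<bar> \<le> M"
proof -
  have "\<bar>\<Sum>j\<in>S. z j\<bar> \<le> real (card S) * M"
    by (rule order_trans[OF sum_abs]) (use sum_bounded_above[of S "\<lambda>j. \<bar>z j\<bar>" M] z in simp)
  moreover have "y + s * (\<Sum>j\<in>S. z j - y) = (1 - s * real (card S)) * y + s * (\<Sum>j\<in>S. z j)"
    by (simp add: sum_subtractf algebra_simps)
  ultimately have "\<bar>y + s * (\<Sum>j\<in>S. z j - y)\<bar> \<le> (1 - s * real (card S)) * M + s * (real (card S) * M)"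
    using s y by (auto simp: abs_mult intro!: order_trans[OF abs_triangle_ineq] add_mono mult_left_mono)
  then show ?thesis
    by (simp add: algebra_simps)
qed

lemma borel_measurable_normal_cdf:
  assumes "\<sigma> > 0"
  shows "normal_cdf \<sigma> \<in> borel_measurable borel"
proof (rule borel_measurable_mono, rule monoI)
  interpret prob_space "density lborel (normal_density 0 \<sigma>)"
    by (rule prob_space_normal_density[OF assms])
  fix y y' :: real assume "y \<le> y'"
  then show "normal_cdf \<sigma> y \<le> normal_cdf \<sigma> y'"
    unfolding normal_cdf_def by (intro finite_measure_mono) auto
qed

text \<open>The recursion is proved pathwise before taking expectations, so the noise enters only
  through its measurability.\<close>

locale binary_consensus = prob_space P
  for P :: "'w measure" +
  fixes n N t0 :: nat
    and a b :: "nat \<Rightarrow> real"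
    and E :: "nat \<Rightarrow> nat \<Rightarrow> bool"
    and c :: "nat \<Rightarrow> nat \<Rightarrow> real"
    and \<sigma> \<beta> \<gamma> Mb :: real
    and x0 z0 :: "nat \<Rightarrow> nat \<Rightarrow> real"
    and d :: "nat \<Rightarrow> nat \<Rightarrow> nat \<Rightarrow> 'w \<Rightarrow> real"
    and x :: "nat \<Rightarrow> nat \<Rightarrow> 'w \<Rightarrow> nat \<Rightarrow> real"
    and u :: "nat \<Rightarrow> nat \<Rightarrow> 'w \<Rightarrow> real"
    and zh :: "nat \<Rightarrow> nat \<Rightarrow> nat \<Rightarrow> 'w \<Rightarrow> real"
  assumes n2: "n \<ge> 2" and N2: "N \<ge> 2"
    and graph: "undirected_connected_graph E N"
    and sigma_pos: "\<sigma> > 0"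
    and noise_measurable: "\<And>i j t. (i, j) \<in> pairs E N \<Longrightarrow> d i j t \<in> borel_measurable P"
    and gamma_pos: "\<gamma> > 0"
    and t0_bound: "real t0 > \<gamma> * real (dmax E N) - 1"
    and Mb_pos: "Mb > 0"
    and x0_bound: "\<And>i. i < N \<Longrightarrow> \<bar>rowmul n (K2 n b) (x0 i)\<bar> \<le> Mb"
    and z0_bound: "\<And>i j. (i, j) \<in> pairs E N \<Longrightarrow> \<bar>z0 i j\<bar> \<le> Mb"
    and x_init: "\<And>i \<omega> k. i < N \<Longrightarrow> \<omega> \<in> space P \<Longrightarrow> k \<in> {1..n} \<Longrightarrow>
           x i (t0 + 1) \<omega> k = x0 i k"
    and x_step: "\<And>i t \<omega> k. i < N \<Longrightarrow> t \<ge> t0 + 1 \<Longrightarrow> \<omega> \<in> space P \<Longrightarrow> k \<in> {1..n} \<Longrightarrow>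
           x i (t + 1) \<omega> k = sys_step n a (x i t \<omega>) (u i t \<omega>) k"
    and u_feedback: "\<And>i t \<omega>. i < N \<Longrightarrow> t \<ge> t0 + 1 \<Longrightarrow> \<omega> \<in> space P \<Longrightarrow>
           u i t \<omega> = rowmul n (K1 n a b) (x i t \<omega>)
             + \<gamma> / (real t + 1) * (\<Sum>j\<in>nbrs E N i. zh i j t \<omega> - rowmul n (K2 n b) (x i t \<omega>))"
    and zh_init: "\<And>i j \<omega>. (i, j) \<in> pairs E N \<Longrightarrow> \<omega> \<in> space P \<Longrightarrow> zh i j t0 \<omega> = z0 i j"
    and zh_step: "\<And>i j t \<omega>. (i, j) \<in> pairs E N \<Longrightarrow> t \<ge> t0 + 1 \<Longrightarrow> \<omega> \<in> space P \<Longrightarrow>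
           zh i j t \<omega> = proj Mb (zh i j (t - 1) \<omega> + \<beta> / real t *
              (normal_cdf \<sigma> (c i j - zh i j (t - 1) \<omega>)
               - (if rowmul n (K2 n b) (x j t \<omega>) + d i j t \<omega> \<le> c i j then 1 else 0)))"
begin

definition compressed :: "nat \<Rightarrow> nat \<Rightarrow> 'w \<Rightarrow> real" where
  "compressed i t \<omega> = rowmul n (K2 n b) (x i t \<omega>)"

definition mean_disagreement :: "nat \<Rightarrow> real" where
  "mean_disagreement t = (\<Sum>i<N. integral\<^sup>L P (\<lambda>\<omega>. (compressed i t \<omega>
     - 1 / real N * (\<Sum>l<N. compressed l t \<omega>))\<^sup>2))"

definition mean_tracking_error :: "nat \<Rightarrow> real" where
  "mean_tracking_error t = (\<Sum>i<N. \<Sum>j\<in>nbrs E N i. integral\<^sup>L P (\<lambda>\<omega>. (zh i j t \<omega> - compressed j t \<omega>)\<^sup>2))"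

lemma pairs_nbr: "(i, j) \<in> pairs E N \<Longrightarrow> j < N"
  unfolding pairs_def nbrs_def by auto

lemma compressed_init:
  assumes "i < N" and "\<omega> \<in> space P"
  shows "compressed i (t0 + 1) \<omega> = rowmul n (K2 n b) (x0 i)"
  unfolding compressed_def rowmul_def using x_init[OF assms] by simp

lemma compressed_step:
  assumes i: "i < N" and t: "t \<ge> t0 + 1" and \<omega>: "\<omega> \<in> space P"
  shows "compressed i (Suc t) \<omega> = compressed i t \<omega> + \<gamma> / (real t + 1) * (\<Sum>j\<in>nbrs E N i. zh i j t \<omega> - compressed i t \<omega>)"
proof -
  have "compressed i (Suc t) \<omega> = rowmul n (K2 n b) (sys_step n a (x i t \<omega>) (u i t \<omega>))"
    unfolding compressed_def rowmul_def using x_step[OF i t \<omega>] by simp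
  then show ?thesis
    unfolding K2_sys_step[OF n2] u_feedback[OF i t \<omega>] compressed_def by simp
qed

lemma zh_bounded:
  assumes p: "(i, j) \<in> pairs E N" and t: "t \<ge> t0" and \<omega>: "\<omega> \<in> space P"
  shows "\<bar>zh i j t \<omega>\<bar> \<le> Mb"
proof (cases "t = t0")
  case True
  then show ?thesis
    using zh_init[OF p \<omega>] z0_bound[OF p] by simp
next
  case False
  then show ?thesis
    using zh_step[OF p _ \<omega>] t Mb_pos by (simp add: proj_def)
qed

lemma compressed_bounded:
  assumes t: "t \<ge> t0 + 1" and i: "i < N" and \<omega>: "\<omega> \<in> space P"
  shows "\<bar>compressed i t \<omega>\<bar> \<le> Mb"
  using t i
proof (induction t arbitrary: i rule: nat_induct_at_least)
  case base
  then show ?case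
    using compressed_init[OF base \<omega>] x0_bound[OF base] by simp
next
  case (Suc t)
  have "\<gamma> * real (card (nbrs E N i)) \<le> \<gamma> * real (dmax E N)"
    using card_nbrs_le_dmax[OF Suc.prems] gamma_pos by simp
  then have "\<gamma> / (real t + 1) * real (card (nbrs E N i)) \<le> 1"
    using t0_bound Suc.hyps by (simp add: field_simps)
  then show ?case
    unfolding compressed_step[OF Suc.prems Suc.hyps \<omega>] using Suc.IH[OF Suc.prems] Suc.prems gamma_pos Suc.hyps
    by (intro abs_consensus_update_le zh_bounded[OF _ _ \<omega>]) (auto simp: pairs_def)
qed

lemma sum_sq_innovation_le:
  assumes t: "t \<ge> t0 + 1" and \<omega>: "\<omega> \<in> space P"
  shows "(\<Sum>i<N. (\<Sum>j\<in>nbrs E N i. zh i j t \<omega> - compressed i t \<omega>)\<^sup>2) \<le> 4 * real N ^ 3 * Mb\<^sup>2"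
proof -
  have "\<bar>\<Sum>j\<in>nbrs E N i. zh i j t \<omega> - compressed i t \<omega>\<bar> \<le> real N * (2 * Mb)" if i: "i < N" for i
  proof -
    have "\<bar>zh i j t \<omega> - compressed i t \<omega>\<bar> \<le> 2 * Mb" if "j \<in> nbrs E N i" for j
      using zh_bounded[of i j t \<omega>] compressed_bounded[OF t i \<omega>] that i t \<omega> by (auto simp: pairs_def)
    then have "\<bar>\<Sum>j\<in>nbrs E N i. zh i j t \<omega> - compressed i t \<omega>\<bar> \<le> real (card (nbrs E N i)) * (2 * Mb)"
      by (intro order_trans[OF sum_abs] sum_bounded_above)
    also have "\<dots> \<le> real N * (2 * Mb)"
      using card_nbrs_le[of E N i] Mb_pos by (intro mult_right_mono) auto
    finally show ?thesis .
  qed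
  then have "(\<Sum>i<N. (\<Sum>j\<in>nbrs E N i. zh i j t \<omega> - compressed i t \<omega>)\<^sup>2) \<le> (\<Sum>i<N. (real N * (2 * Mb))\<^sup>2)"
    using Mb_pos by (intro sum_mono) (simp add: power2_le_iff_abs_le)
  then show ?thesis
    by (simp add: power2_eq_square power3_eq_cube algebra_simps)
qed

lemma zh_measurable_step:
  assumes p: "(i, j) \<in> pairs E N" and t: "t \<ge> t0 + 1"
    and zh_prev: "zh i j (t - 1) \<in> borel_measurable P" and out: "compressed j t \<in> borel_measurable P"
  shows "zh i j t \<in> borel_measurable P"
proof -
  have "{\<omega> \<in> space P. compressed j t \<omega> + d i j t \<omega> \<le> c i j} \<in> sets P"
    using out noise_measurable[OF p] by measurable
  then have "(\<lambda>\<omega>. proj Mb (zh i j (t - 1) \<omega> + \<beta> / real t *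
      (normal_cdf \<sigma> (c i j - zh i j (t - 1) \<omega>)
       - (if compressed j t \<omega> + d i j t \<omega> \<le> c i j then 1 else 0)))) \<in> borel_measurable P"
    unfolding proj_def
    by (intro borel_measurable_max borel_measurable_min borel_measurable_const borel_measurable_add
        borel_measurable_times borel_measurable_diff zh_prev measurable_If
        measurable_compose[OF _ borel_measurable_normal_cdf[OF sigma_pos]]) auto
  then show ?thesis
    by (rule measurable_cong[THEN iffD1, rotated]) (simp add: zh_step[OF p t] compressed_def)
qed

lemma compressed_zh_measurable:
  assumes "t \<ge> t0 + 1"
  shows "(\<forall>i<N. compressed i t \<in> borel_measurable P) \<and>
    (\<forall>i j. (i, j) \<in> pairs E N \<longrightarrow> zh i j t \<in> borel_measurable P)"
  using assms
proof (induction t rule: nat_induct_at_least)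
  case base
  have out: "compressed i (t0 + 1) \<in> borel_measurable P" if "i < N" for i
    by (rule measurable_cong[THEN iffD1, rotated, OF measurable_const[of "rowmul n (K2 n b) (x0 i)"]])
      (use compressed_init[OF that] in auto)
  have zh0: "zh i j t0 \<in> borel_measurable P" if "(i, j) \<in> pairs E N" for i j
    by (rule measurable_cong[THEN iffD1, rotated, OF measurable_const[of "z0 i j"]]) (use zh_init[OF that] in auto)
  have "zh i j (t0 + 1) \<in> borel_measurable P" if "(i, j) \<in> pairs E N" for i j
    by (rule zh_measurable_step[OF that]) (use zh0[OF that] out[OF pairs_nbr[OF that]] in simp_all)
  then show ?case
    using out by blast
next
  case (Suc t)
  have out: "compressed i (Suc t) \<in> borel_measurable P" if i: "i < N" for i
  proof -
    have "(\<lambda>\<omega>. compressed i t \<omega> + \<gamma> / (real t + 1) * (\<Sum>j\<in>nbrs E N i. zh i j t \<omega> - compressed i t \<omega>))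
        \<in> borel_measurable P"
      using Suc.IH i
      by (intro borel_measurable_add borel_measurable_times borel_measurable_const borel_measurable_sum
          borel_measurable_diff) (auto simp: pairs_def)
    then show ?thesis
      by (rule measurable_cong[THEN iffD1, rotated]) (simp add: compressed_step[OF i Suc.hyps])
  qed
  have "zh i j (Suc t) \<in> borel_measurable P" if "(i, j) \<in> pairs E N" for i j
    by (rule zh_measurable_step[OF that]) (use out[OF pairs_nbr[OF that]] Suc.IH Suc.hyps that in simp_all)
  then show ?case
    using out by blast
qed

lemma integrable_bounded:
  fixes f :: "'w \<Rightarrow> real"
  assumes "f \<in> borel_measurable P" and "\<And>\<omega>. \<omega> \<in> space P \<Longrightarrow> \<bar>f \<omega>\<bar> \<le> B"
  shows "integrable P f"
  using assms by (intro integrable_const_bound[where B = B]) (auto intro: AE_I2)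

lemma integrable_deviation_sq:
  assumes t: "t \<ge> t0 + 1" and i: "i < N"
  shows "integrable P (\<lambda>\<omega>. (compressed i t \<omega> - 1 / real N * (\<Sum>l<N. compressed l t \<omega>))\<^sup>2)"
proof (rule integrable_bounded)
  show "(\<lambda>\<omega>. (compressed i t \<omega> - 1 / real N * (\<Sum>l<N. compressed l t \<omega>))\<^sup>2) \<in> borel_measurable P"
    using compressed_zh_measurable[OF t] i
    by (intro borel_measurable_power borel_measurable_diff borel_measurable_times borel_measurable_const
        borel_measurable_sum) auto
  fix \<omega> assume \<omega>: "\<omega> \<in> space P"
  have "\<bar>\<Sum>l<N. compressed l t \<omega>\<bar> \<le> real N * Mb"
    using sum_bounded_above[of "{..<N}" "\<lambda>l. \<bar>compressed l t \<omega>\<bar>" Mb] compressed_bounded[OF t _ \<omega>]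
    by (intro order_trans[OF sum_abs]) auto
  then have "\<bar>1 / real N * (\<Sum>l<N. compressed l t \<omega>)\<bar> \<le> Mb"
    using N2 by (simp add: abs_mult divide_le_eq mult.commute)
  then have "\<bar>compressed i t \<omega> - 1 / real N * (\<Sum>l<N. compressed l t \<omega>)\<bar> \<le> 2 * Mb"
    using compressed_bounded[OF t i \<omega>] by linarith
  from power_mono[OF this abs_ge_zero, of 2]
  show "\<bar>(compressed i t \<omega> - 1 / real N * (\<Sum>l<N. compressed l t \<omega>))\<^sup>2\<bar> \<le> (2 * Mb)\<^sup>2"
    by simp
qed

lemma integrable_tracking_sq:
  assumes t: "t \<ge> t0 + 1" and p: "(i, j) \<in> pairs E N"
  shows "integrable P (\<lambda>\<omega>. (zh i j t \<omega> - compressed j t \<omega>)\<^sup>2)"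
proof (rule integrable_bounded)
  show "(\<lambda>\<omega>. (zh i j t \<omega> - compressed j t \<omega>)\<^sup>2) \<in> borel_measurable P"
    using compressed_zh_measurable[OF t] p pairs_nbr[OF p]
    by (intro borel_measurable_power borel_measurable_diff) auto
  fix \<omega> assume \<omega>: "\<omega> \<in> space P"
  have "\<bar>zh i j t \<omega> - compressed j t \<omega>\<bar> \<le> 2 * Mb"
    using zh_bounded[of i j t \<omega>] compressed_bounded[OF t pairs_nbr[OF p] \<omega>] p t \<omega>
      abs_triangle_ineq4[of "zh i j t \<omega>" "compressed j t \<omega>"] by simp
  from power_mono[OF this abs_ge_zero, of 2]
  show "\<bar>(zh i j t \<omega> - compressed j t \<omega>)\<^sup>2\<bar> \<le> (2 * Mb)\<^sup>2"
    by simp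
qed

lemma mean_disagreement_eq_integral:
  assumes "t \<ge> t0 + 1"
  shows "integrable P (\<lambda>\<omega>. disagreement N (\<lambda>i. compressed i t \<omega>))"
    and "mean_disagreement t = (\<integral>\<omega>. disagreement N (\<lambda>i. compressed i t \<omega>) \<partial>P)"
proof -
  have int: "integrable P (\<lambda>\<omega>. (compressed i t \<omega> - 1 / real N * (\<Sum>l<N. compressed l t \<omega>))\<^sup>2)"
    if "i \<in> {..<N}" for i
    using integrable_deviation_sq[OF assms] that by simp
  then show "integrable P (\<lambda>\<omega>. disagreement N (\<lambda>i. compressed i t \<omega>))"
    unfolding disagreement_def by (rule Bochner_Integration.integrable_sum)
  show "mean_disagreement t = (\<integral>\<omega>. disagreement N (\<lambda>i. compressed i t \<omega>) \<partial>P)"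
    unfolding mean_disagreement_def disagreement_def using int
    by (subst Bochner_Integration.integral_sum) auto
qed

lemma mean_tracking_error_eq_integral:
  assumes "t \<ge> t0 + 1"
  shows "integrable P (\<lambda>\<omega>. tracking_error E N (\<lambda>i j. zh i j t \<omega>) (\<lambda>j. compressed j t \<omega>))"
    and "mean_tracking_error t = (\<integral>\<omega>. tracking_error E N (\<lambda>i j. zh i j t \<omega>) (\<lambda>j. compressed j t \<omega>) \<partial>P)"
proof -
  have int: "integrable P (\<lambda>\<omega>. (zh i j t \<omega> - compressed j t \<omega>)\<^sup>2)" if "i < N" "j \<in> nbrs E N i" for i j
    using integrable_tracking_sq[OF assms] that by (simp add: pairs_def)
  then show "integrable P (\<lambda>\<omega>. tracking_error E N (\<lambda>i j. zh i j t \<omega>) (\<lambda>j. compressed j t \<omega>))"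
    unfolding tracking_error_def by auto
  show "mean_tracking_error t = (\<integral>\<omega>. tracking_error E N (\<lambda>i j. zh i j t \<omega>) (\<lambda>j. compressed j t \<omega>) \<partial>P)"
    unfolding mean_tracking_error_def tracking_error_def using int
    by (subst Bochner_Integration.integral_sum) (auto intro!: sum.cong Bochner_Integration.integral_sum[symmetric])
qed

theorem mean_disagreement_recursion:
  "\<exists>C \<ge> 0. \<forall>t \<ge> t0 + 2.
     mean_disagreement t \<le> (1 - \<gamma> * lambda2 E N / real t) * mean_disagreement (t - 1)
       + \<gamma> * lambdaG E N / (real t * lambda2 E N) * mean_tracking_error (t - 1) + C / (real t)\<^sup>2"
proof (intro exI[of _ "\<gamma>\<^sup>2 * (4 * real N ^ 3 * Mb\<^sup>2)"] conjI allI impI)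
  fix t assume "t \<ge> t0 + 2"
  then obtain s where ts: "t = Suc s" and s: "s \<ge> t0 + 1"
    by (cases t) auto
  define h where "h = \<gamma> / real t"
  define K where "K = 4 * real N ^ 3 * Mb\<^sup>2"
  define D where "D t' \<omega> = disagreement N (\<lambda>i. compressed i t' \<omega>)" for t' \<omega>
  define T where "T t' \<omega> = tracking_error E N (\<lambda>i j. zh i j t' \<omega>) (\<lambda>j. compressed j t' \<omega>)" for t' \<omega>
  have h: "h \<ge> 0"
    unfolding h_def using gamma_pos by simp
  have pointwise: "D t \<omega> \<le> (1 - h * lambda2 E N) * D s \<omega> + h * lambdaG E N / lambda2 E N * T s \<omega> + h\<^sup>2 * K"
    if \<omega>: "\<omega> \<in> space P" for \<omega>
  proof -
    have "compressed i t \<omega> = compressed i s \<omega> + h * (\<Sum>j\<in>nbrs E N i. zh i j s \<omega> - compressed i s \<omega>)"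
      if "i < N" for i
      unfolding h_def ts compressed_step[OF that s \<omega>] by (simp add: add.commute)
    then have "D t \<omega> \<le> (1 - h * lambda2 E N) * D s \<omega> + h * lambdaG E N / lambda2 E N * T s \<omega>
        + h\<^sup>2 * (\<Sum>i<N. (\<Sum>j\<in>nbrs E N i. zh i j s \<omega> - compressed i s \<omega>)\<^sup>2)"
      unfolding D_def T_def by (rule disagreement_consensus_step_le[OF graph N2 h])
    also have "\<dots> \<le> (1 - h * lambda2 E N) * D s \<omega> + h * lambdaG E N / lambda2 E N * T s \<omega> + h\<^sup>2 * K"
      unfolding K_def using sum_sq_innovation_le[OF s \<omega>] by (intro add_left_mono mult_left_mono) auto
    finally show ?thesis .
  qed
  have "mean_disagreement t = (\<integral>\<omega>. D t \<omega> \<partial>P)"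
    unfolding D_def using s ts by (intro mean_disagreement_eq_integral) auto
  also have "\<dots> \<le> (\<integral>\<omega>. (1 - h * lambda2 E N) * D s \<omega> + h * lambdaG E N / lambda2 E N * T s \<omega> + h\<^sup>2 * K \<partial>P)"
    using pointwise mean_disagreement_eq_integral(1)[of t] mean_disagreement_eq_integral(1)[OF s]
      mean_tracking_error_eq_integral(1)[OF s] s ts
    unfolding D_def T_def by (intro integral_mono) auto
  also have "\<dots> = (1 - h * lambda2 E N) * mean_disagreement s + h * lambdaG E N / lambda2 E N * mean_tracking_error s
      + h\<^sup>2 * K"
    using mean_disagreement_eq_integral[OF s] mean_tracking_error_eq_integral[OF s]
    unfolding D_def T_def by (simp add: prob_space)
  finally show "mean_disagreement t \<le> (1 - \<gamma> * lambda2 E N / real t) * mean_disagreement (t - 1)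
      + \<gamma> * lambdaG E N / (real t * lambda2 E N) * mean_tracking_error (t - 1)
      + \<gamma>\<^sup>2 * (4 * real N ^ 3 * Mb\<^sup>2) / (real t)\<^sup>2"
    unfolding h_def K_def ts by (simp add: power_divide)
qed simp

end

theorem lemma3:
  fixes P :: "'w measure"
    and n N t0 :: nat
    and a b :: "nat \<Rightarrow> real"
    and E :: "nat \<Rightarrow> nat \<Rightarrow> bool"
    and c :: "nat \<Rightarrow> nat \<Rightarrow> real"
    and \<sigma> \<beta> \<gamma> Mb :: real
    and x0 :: "nat \<Rightarrow> nat \<Rightarrow> real"
    and z0 :: "nat \<Rightarrow> nat \<Rightarrow> real"
    and d :: "nat \<Rightarrow> nat \<Rightarrow> nat \<Rightarrow> 'w \<Rightarrow> real"
    and x :: "nat \<Rightarrow> nat \<Rightarrow> 'w \<Rightarrow> nat \<Rightarrow> real"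
    and u :: "nat \<Rightarrow> nat \<Rightarrow> 'w \<Rightarrow> real"
    and zh :: "nat \<Rightarrow> nat \<Rightarrow> nat \<Rightarrow> 'w \<Rightarrow> real"
  assumes n2: "n \<ge> 2" and N2: "N \<ge> 2"
    and graph: "undirected_connected_graph E N"
    and prob: "prob_space P"
    and sigma_pos: "\<sigma> > 0"
    and noise_normal: "\<And>i j t. (i, j) \<in> pairs E N \<Longrightarrow>
           distributed P lborel (d i j t) (\<lambda>y. ennreal (normal_density 0 \<sigma> y))"
    and noise_indep: "prob_space.indep_vars P (\<lambda>_. borel) (\<lambda>(i, j, t). d i j t)
           {(i, j, t). (i, j) \<in> pairs E N}"
    and beta_pos: "\<beta> > 0" and gamma_pos: "\<gamma> > 0"
    and t0_bound: "real t0 > \<gamma> * real (dmax E N) - 1"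
    and Mb_pos: "Mb > 0"
    and x0_bound: "\<And>i. i < N \<Longrightarrow> \<bar>rowmul n (K2 n b) (x0 i)\<bar> \<le> Mb"
    and z0_bound: "\<And>i j. (i, j) \<in> pairs E N \<Longrightarrow> \<bar>z0 i j\<bar> \<le> Mb"
    and x_init: "\<And>i \<omega> k. i < N \<Longrightarrow> \<omega> \<in> space P \<Longrightarrow> k \<in> {1..n} \<Longrightarrow>
           x i (t0 + 1) \<omega> k = x0 i k"
    and x_step: "\<And>i t \<omega> k. i < N \<Longrightarrow> t \<ge> t0 + 1 \<Longrightarrow> \<omega> \<in> space P \<Longrightarrow> k \<in> {1..n} \<Longrightarrow>
           x i (t + 1) \<omega> k = sys_step n a (x i t \<omega>) (u i t \<omega>) k"
    and u_def: "\<And>i t \<omega>. i < N \<Longrightarrow> t \<ge> t0 + 1 \<Longrightarrow> \<omega> \<in> space P \<Longrightarrow>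
           u i t \<omega> = rowmul n (K1 n a b) (x i t \<omega>)
             + \<gamma> / (real t + 1) * (\<Sum>j\<in>nbrs E N i. zh i j t \<omega> - rowmul n (K2 n b) (x i t \<omega>))"
    and zh_init: "\<And>i j \<omega>. (i, j) \<in> pairs E N \<Longrightarrow> \<omega> \<in> space P \<Longrightarrow> zh i j t0 \<omega> = z0 i j"
    and zh_step: "\<And>i j t \<omega>. (i, j) \<in> pairs E N \<Longrightarrow> t \<ge> t0 + 1 \<Longrightarrow> \<omega> \<in> space P \<Longrightarrow>
           zh i j t \<omega> = proj Mb (zh i j (t - 1) \<omega> + \<beta> / real t *
              (normal_cdf \<sigma> (c i j - zh i j (t - 1) \<omega>)
               - (if rowmul n (K2 n b) (x j t \<omega>) + d i j t \<omega> \<le> c i j then 1 else 0)))"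
  defines "V \<equiv> \<lambda>t. \<Sum>i<N. integral\<^sup>L P (\<lambda>\<omega>. (rowmul n (K2 n b) (x i t \<omega>)
                   - (1 / real N) * (\<Sum>l<N. rowmul n (K2 n b) (x l t \<omega>)))\<^sup>2)"
    and "R \<equiv> \<lambda>t. \<Sum>i<N. \<Sum>j\<in>nbrs E N i. integral\<^sup>L P (\<lambda>\<omega>. (zh i j t \<omega> - rowmul n (K2 n b) (x j t \<omega>))\<^sup>2)"
  shows "\<exists>C \<ge> 0. \<forall>t \<ge> t0 + 2.
           V t \<le> (1 - \<gamma> * lambda2 E N / real t) * V (t - 1)
                  + \<gamma> * lambdaG E N / (real t * lambda2 E N) * R (t - 1) + C / (real t)\<^sup>2"
proof -
  interpret binary_consensus P n N t0 a b E c \<sigma> \<beta> \<gamma> Mb x0 z0 d x u zh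
  proof (rule binary_consensus.intro[OF prob], rule binary_consensus_axioms.intro)
    show "d i j t \<in> borel_measurable P" if "(i, j) \<in> pairs E N" for i j t
      using distributed_measurable[OF noise_normal[OF that, of t]] by simp
  qed (fact n2 N2 graph sigma_pos gamma_pos t0_bound Mb_pos x0_bound z0_bound x_init x_step u_def
      zh_init zh_step)+
  have "V t = mean_disagreement t" and "R t = mean_tracking_error t" for t
    unfolding V_def R_def mean_disagreement_def mean_tracking_error_def compressed_def by simp_all
  then show ?thesis
    using mean_disagreement_recursion by presburger
qed

end
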